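(* Assume (C-1), (C-2), and the Local Intrinsic Dimension assumption at $\bm\theta_t$ with constant $r$. Then there is a universal constant $c_1>0$ such that $$\|\nabla\mathcal{L}_\mu(\bm\theta_t)-\nabla\mathcal{L}(\bm\theta_t)\|\le\frac{\sqrt3\,\mu Lr\sqrt d}{2}+\frac{\mu L(d+4)\sqrt d}{2}\exp\Big(-\frac{c_1}{2}d\Big),$$ and $$\|\nabla\mathcal{L}(\bm\theta_t)\|^2\le3\mu^2L^2r^2d+\mu^2L^2d(d+4)^2\exp(-c_1d)+2\|\nabla\mathcal{L}_\mu(\bm\theta_t)\|^2.$$
   Context: Per-sample losses $\mathcal{L}_i$, overall loss $\mathcal{L}$ on $\mathbb R^d$. (C-1): each $\mathcal{L}_i$ is $L$-smooth. (C-2): unbiased stochastic gradients with variance $\le\sigma^2$ and $\|\nabla\mathcal{L}\|\le G$. $\mathcal{L}_\mu(\bm\theta)=\mathbb E_{\mathbf u\sim\mathcal N(\mathbf 0,\mathbf I_d)}[\mathcal{L}(\bm\theta+\mu\mathbf u)]$, $\mu>0$. $\mathrm{intdim}(\mathbf A)=\mathrm{Tr}(\mathbf A)/\|\mathbf A\|_{\mathrm{op}}$. Local Intrinsic Dimension assumption at $\bm\theta_t$ (step size $\alpha$, parameter $s$, constant $r\le d$): there is a symmetric PSD $\mathbf H(\bm\theta_t)\preceq L\mathbf I_d$ with $\nabla^2\mathcal{L}(\bm\theta)\preceq\mathbf H(\bm\theta_t)$ for all $\|\bm\theta-\bm\theta_t\|\le2\alpha sG+2\mu\sqrt d$, and $\mathrm{intdim}(\mathbf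 H(\bm\theta_t))\le r$. *)

theory Defs
  imports "HOL-Analysis.Analysis" "HOL-Probability.Probability"
begin

text \<open>To let the constant c1 be universal (independent of the dimension d), all the
spaces R^d are realised inside one real inner product space: the finitely supported
real sequences with the standard (Euclidean) inner product.\<close>

typedef fvec = "{f :: nat \<Rightarrow> real. finite {i. f i \<noteq> 0}}"
  morphisms vx Abs_fvec
  by (rule exI[of _ "\<lambda>_. 0"]) simp

setup_lifting type_definition_fvec

lemma fvec_finite [simp]: "finite {i. vx x i \<noteq> 0}"
  using vx by auto

lemma fvec_eqI: "(\<And>i. vx x i = vx y i) \<Longrightarrow> x = y"
  by (metis vx_inject ext)

instantiation fvec :: ab_group_add
begin
lift_definition zero_fvec :: fvec is "\<lambda>_. 0" by simp
lift_definition plus_fvec :: "fvec \<Rightarrow> fvec \<Rightarrow> fvec" is "\<lambda>f g i. f i + g i"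
proof -
  fix f g :: "nat \<Rightarrow> real"
  assume "finite {i. f i \<noteq> 0}" "finite {i. g i \<noteq> 0}"
  then show "finite {i. f i + g i \<noteq> 0}"
    by (rule finite_subset[OF _ finite_UnI, rotated]) auto
qed
lift_definition uminus_fvec :: "fvec \<Rightarrow> fvec" is "\<lambda>f i. - f i" by simp
lift_definition minus_fvec :: "fvec \<Rightarrow> fvec \<Rightarrow> fvec" is "\<lambda>f g i. f i - g i"
proof -
  fix f g :: "nat \<Rightarrow> real"
  assume "finite {i. f i \<noteq> 0}" "finite {i. g i \<noteq> 0}"
  then show "finite {i. f i - g i \<noteq> 0}"
    by (rule finite_subset[OF _ finite_UnI, rotated]) auto
qed
instance by standard (transfer; auto)+
end

instantiation fvec :: real_vector
begin
lift_definition scaleR_fvec :: "real \<Rightarrow> fvec \<Rightarrow> fvec" is "\<lambda>r f i. r * f i"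
proof -
  fix r :: real and f :: "nat \<Rightarrow> real"
  assume "finite {i. f i \<noteq> 0}"
  then show "finite {i. r * f i \<noteq> 0}" by (rule finite_subset[rotated]) auto
qed
instance by standard (transfer; auto simp: algebra_simps)+
end

definition supp :: "fvec \<Rightarrow> nat set" where "supp x = {i. vx x i \<noteq> 0}"

instantiation fvec :: real_inner
begin
definition inner_fvec :: "fvec \<Rightarrow> fvec \<Rightarrow> real" where
  "inner_fvec x y = (\<Sum>i\<in>supp x \<union> supp y. vx x i * vx y i)"
definition norm_fvec :: "fvec \<Rightarrow> real" where "norm_fvec x = sqrt (inner x x)"
definition sgn_fvec :: "fvec \<Rightarrow> fvec" where "sgn_fvec x = x /\<^sub>R norm x"
definition dist_fvec :: "fvec \<Rightarrow> fvec \<Rightarrow> real" where "dist_fvec x y = norm (x - y)"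
definition uniformity_fvec :: "(fvec \<times> fvec) filter" where
  "uniformity_fvec = (INF e\<in>{0<..}. principal {(x, y). dist x y < e})"
definition open_fvec :: "fvec set \<Rightarrow> bool" where
  "open_fvec U = (\<forall>x\<in>U. \<forall>\<^sub>F (x', y) in uniformity. x' = x \<longrightarrow> y \<in> U)"

lemma inner_fvec_on':
  assumes "finite S" "supp x \<subseteq> S \<or> supp y \<subseteq> S"
  shows "inner x y = (\<Sum>i\<in>S. vx x i * vx y i)"
proof -
  have "inner x y = (\<Sum>i\<in>S \<union> supp x \<union> supp y. vx x i * vx y i)"
    unfolding inner_fvec_def
    by (rule sum.mono_neutral_cong_left) (use assms in \<open>auto simp: supp_def\<close>)
  also have "\<dots> = (\<Sum>i\<in>S. vx x i * vx y i)"
    by (rule sum.mono_neutral_cong_right) (use assms in \<open>auto simp: supp_def\<close>)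
  finally show ?thesis .
qed

instance
proof
  fix x y z :: fvec and r :: real
  show "inner x y = inner y x" unfolding inner_fvec_def by (simp add: Un_commute mult.commute)
  define S where "S = supp x \<union> supp y \<union> supp z"
  have fS: "finite S" by (simp add: S_def supp_def)
  have "inner (x + y) z = (\<Sum>i\<in>S. vx (x+y) i * vx z i)"
    by (rule inner_fvec_on') (use fS in \<open>auto simp: S_def supp_def\<close>)
  also have "\<dots> = (\<Sum>i\<in>S. vx x i * vx z i) + (\<Sum>i\<in>S. vx y i * vx z i)"
    by (simp add: plus_fvec.rep_eq distrib_right sum.distrib)
  also have "\<dots> = inner x z + inner y z"
    using fS by (simp add: inner_fvec_on'[of S] S_def)
  finally show "inner (x + y) z = inner x z + inner y z" .
  have "inner (r *\<^sub>R x) y = (\<Sum>i\<in>supp x \<union> supp y. vx (r *\<^sub>R x) i * vx y i)"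
    by (rule inner_fvec_on') (auto simp: supp_def scaleR_fvec.rep_eq)
  then show "inner (r *\<^sub>R x) y = r * inner x y"
    by (simp add: inner_fvec_def scaleR_fvec.rep_eq sum_distrib_left mult.assoc)
  show "0 \<le> inner x x" unfolding inner_fvec_def by (auto intro: sum_nonneg)
  show "(inner x x = 0) = (x = 0)"
  proof
    assume "inner x x = 0"
    then have "(\<Sum>i\<in>supp x. (vx x i)\<^sup>2) = 0" by (simp add: inner_fvec_def power2_eq_square)
    then have "\<forall>i\<in>supp x. (vx x i)\<^sup>2 = 0"
      by (subst (asm) sum_nonneg_eq_0_iff) (auto simp: supp_def)
    then show "x = 0" by (intro fvec_eqI) (auto simp: supp_def zero_fvec.rep_eq)
  qed (simp add: inner_fvec_def supp_def zero_fvec.rep_eq)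
  show "norm x = sqrt (inner x x)" by (simp add: norm_fvec_def)
qed (simp_all add: sgn_fvec_def dist_fvec_def uniformity_fvec_def open_fvec_def)
end

definition Rd :: "nat \<Rightarrow> fvec set" where
  "Rd d = {x. \<forall>i\<ge>d. vx x i = 0}"

lift_definition vec_of :: "nat \<Rightarrow> (nat \<Rightarrow> real) \<Rightarrow> fvec" is
  "\<lambda>d u i. if i < d then u i else 0"
  by (rule finite_subset[of _ "{..<_}"]) auto

definition gauss :: "nat \<Rightarrow> (nat \<Rightarrow> real) measure" where
  "gauss d = PiM {..<d} (\<lambda>_. std_normal_distribution)"

definition smoothed :: "nat \<Rightarrow> real \<Rightarrow> (fvec \<Rightarrow> real) \<Rightarrow> fvec \<Rightarrow> real" where
  "smoothed d \<mu> f \<theta> = (\<integral>u. f (\<theta> + \<mu> *\<^sub>R vec_of d u) \<partial>gauss d)"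

definition has_grad :: "nat \<Rightarrow> (fvec \<Rightarrow> real) \<Rightarrow> fvec \<Rightarrow> fvec \<Rightarrow> bool" where
  "has_grad d f g x \<longleftrightarrow> g \<in> Rd d \<and> (f has_derivative (\<lambda>h. g \<bullet> h)) (at x within Rd d)"

definition smooth_with :: "nat \<Rightarrow> real \<Rightarrow> (fvec \<Rightarrow> real) \<Rightarrow> (fvec \<Rightarrow> fvec) \<Rightarrow> bool" where
  "smooth_with d L f g \<longleftrightarrow> (\<forall>x\<in>Rd d. has_grad d f (g x) x) \<and>
     (\<forall>x\<in>Rd d. \<forall>y\<in>Rd d. norm (g x - g y) \<le> L * norm (x - y))"

definition sym_op :: "nat \<Rightarrow> (fvec \<Rightarrow> fvec) \<Rightarrow> bool" where
  "sym_op d A \<longleftrightarrow> linear A \<and> (\<forall>v\<in>Rd d. A v \<in> Rd d) \<and>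
     (\<forall>u\<in>Rd d. \<forall>v\<in>Rd d. u \<bullet> A v = A u \<bullet> v)"

definition psd_op :: "nat \<Rightarrow> (fvec \<Rightarrow> fvec) \<Rightarrow> bool" where
  "psd_op d A \<longleftrightarrow> sym_op d A \<and> (\<forall>v\<in>Rd d. 0 \<le> v \<bullet> A v)"

definition loewner_le :: "nat \<Rightarrow> (fvec \<Rightarrow> fvec) \<Rightarrow> (fvec \<Rightarrow> fvec) \<Rightarrow> bool" where
  "loewner_le d A B \<longleftrightarrow> (\<forall>v\<in>Rd d. v \<bullet> A v \<le> v \<bullet> B v)"

definition std_basis :: "nat \<Rightarrow> fvec" where
  "std_basis i = vec_of (Suc i) (\<lambda>j. if j = i then 1 else 0)"

definition trace_op :: "nat \<Rightarrow> (fvec \<Rightarrow> fvec) \<Rightarrow> real" where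
  "trace_op d A = (\<Sum>i<d. std_basis i \<bullet> A (std_basis i))"

definition opnorm :: "nat \<Rightarrow> (fvec \<Rightarrow> fvec) \<Rightarrow> real" where
  "opnorm d A = Sup {norm (A v) | v. v \<in> Rd d \<and> norm v = 1}"

definition intdim :: "nat \<Rightarrow> (fvec \<Rightarrow> fvec) \<Rightarrow> real" where
  "intdim d A = trace_op d A / opnorm d A"

end

(*
  The smoothed gradient is E [grad L (theta + mu u)] with u ~ N(0, I_d). Test its error
  against a unit vector e and split the expectation at |u| = 2 sqrt d.

  On the bulk, pairing u with -u turns the integrand into the second difference
  e . (grad L (theta + x) + grad L (theta - x) - 2 grad L theta), x = mu u. By the mean
  value theorem this is e . (D1 - D2) x for two derivatives of grad L inside the ball where
  the Hessian is dominated by H; D1 - D2 is symmetric with quadratic form bounded by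
  L |z|^2 + z . H z, so polarization bounds it by sqrt (2 L) sqrt (L |x|^2 + x . H x).
  Jensen's inequality and E [u . H u] = tr H <= r L then give the sqrt 3 mu L r sqrt d / 2
  term. On the tail the integrand is at most L mu |u|, and E [|u|; |u| > 2 sqrt d] is
  at most 2 sqrt d exp (- d / 2), so the universal constant is c1 = 1. The second
  inequality follows from |grad L| <= |grad L_mu| + bias.
*)

theory Submission
  imports Defs
begin

lemma vx_vec_of: "vx (vec_of d u) i = (if i < d then u i else 0)"
  by (simp add: vec_of.rep_eq)

lemma vx_add [simp]: "vx (x + y) i = vx x i + vx y i" by (simp add: plus_fvec.rep_eq)
lemma vx_diff [simp]: "vx (x - y) i = vx x i - vx y i" by (simp add: minus_fvec.rep_eq)
lemma vx_minus [simp]: "vx (- x) i = - vx x i" by (simp add: uminus_fvec.rep_eq)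
lemma vx_scaleR [simp]: "vx (c *\<^sub>R x) i = c * vx x i" by (simp add: scaleR_fvec.rep_eq)
lemma vx_zero [simp]: "vx 0 i = 0" by (simp add: zero_fvec.rep_eq)

lemma vx_sum: "finite A \<Longrightarrow> vx (sum f A) i = (\<Sum>a\<in>A. vx (f a) i)"
  by (induct A rule: finite_induct) auto

lemma vx_std_basis: "vx (std_basis j) i = (if i = j then 1 else 0)"
  by (simp add: std_basis_def vx_vec_of)

lemma vec_of_in_Rd [simp]: "vec_of d u \<in> Rd d"
  by (simp add: Rd_def vx_vec_of)

lemma Rd_add [intro]: "x \<in> Rd d \<Longrightarrow> y \<in> Rd d \<Longrightarrow> x + y \<in> Rd d" by (simp add: Rd_def)
lemma Rd_diff [intro]: "x \<in> Rd d \<Longrightarrow> y \<in> Rd d \<Longrightarrow> x - y \<in> Rd d" by (simp add: Rd_def)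
lemma Rd_minus [intro]: "x \<in> Rd d \<Longrightarrow> - x \<in> Rd d" by (simp add: Rd_def)
lemma Rd_scaleR [intro]: "x \<in> Rd d \<Longrightarrow> c *\<^sub>R x \<in> Rd d" by (simp add: Rd_def)
lemma Rd_zero [simp]: "0 \<in> Rd d" by (simp add: Rd_def)

lemma Rd_sum: "(\<And>i. i \<in> A \<Longrightarrow> f i \<in> Rd d) \<Longrightarrow> sum f A \<in> Rd d"
  by (cases "finite A") (auto simp: Rd_def vx_sum)

lemma Rd_add_scaleR_vec_of [simp]: "\<theta> \<in> Rd d \<Longrightarrow> \<theta> + \<mu> *\<^sub>R vec_of d u \<in> Rd d"
  by (intro Rd_add Rd_scaleR vec_of_in_Rd)

lemma std_basis_in_Rd: "i < d \<Longrightarrow> std_basis i \<in> Rd d"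
  by (simp add: Rd_def vx_std_basis)

lemma inner_Rd_eq_sum: "x \<in> Rd d \<or> y \<in> Rd d \<Longrightarrow> inner x y = (\<Sum>i<d. vx x i * vx y i)"
  by (rule inner_fvec_on') (auto simp: supp_def Rd_def not_less[symmetric])

lemma inner_std_basis_left: "inner (std_basis i) x = vx x i"
proof -
  have "inner (std_basis i) x = (\<Sum>j<Suc i. vx (std_basis i) j * vx x j)"
    by (rule inner_Rd_eq_sum) (simp add: std_basis_in_Rd)
  also have "\<dots> = vx x i" by (simp add: vx_std_basis if_distrib cong: if_cong)
  finally show ?thesis .
qed

lemma inner_std_basis_right: "inner x (std_basis i) = vx x i"
  using inner_std_basis_left by (simp add: inner_commute)

lemma Rd_eq_sum_std_basis: "x \<in> Rd d \<Longrightarrow> x = (\<Sum>i<d. vx x i *\<^sub>R std_basis i)"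
  by (intro fvec_eqI) (auto simp: vx_sum vx_std_basis Rd_def if_distrib cong: if_cong)

lemma vec_of_eq_sum_std_basis: "vec_of d u = (\<Sum>i<d. u i *\<^sub>R std_basis i)"
  using Rd_eq_sum_std_basis[OF vec_of_in_Rd, of d u] by (simp add: vx_vec_of)

lemma vec_of_vx: "z \<in> Rd d \<Longrightarrow> vec_of d (vx z) = z"
  by (intro fvec_eqI) (auto simp: vx_vec_of Rd_def)

lemma vec_of_cong: "(\<And>i. i < d \<Longrightarrow> u i = v i) \<Longrightarrow> vec_of d u = vec_of d v"
  by (intro fvec_eqI) (simp add: vx_vec_of)

lemma vec_of_uminus: "vec_of d (\<lambda>i. - u i) = - vec_of d u"
  by (intro fvec_eqI) (simp add: vx_vec_of)

lemma power2_norm_Rd: "x \<in> Rd d \<Longrightarrow> (norm x)\<^sup>2 = (\<Sum>i<d. (vx x i)\<^sup>2)"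
  by (subst power2_norm_eq_inner, subst inner_Rd_eq_sum) (auto simp: power2_eq_square)

lemma power2_norm_vec_of: "(norm (vec_of d u))\<^sup>2 = (\<Sum>i<d. (u i)\<^sup>2)"
  using power2_norm_Rd[OF vec_of_in_Rd[of d u]] by (simp add: vx_vec_of)

lemma norm_std_basis: "norm (std_basis i) = 1"
  using power2_norm_Rd[OF std_basis_in_Rd[of i "Suc i"]]
  by (simp add: vx_std_basis if_distrib cong: if_cong)
     (metis norm_ge_zero power2_eq_1_iff abs_of_nonneg abs_1 real_sqrt_abs real_sqrt_one)

lemma quadratic_form_vec_of:
  assumes "linear H"
  shows "vec_of d u \<bullet> H (vec_of d u) =
    (\<Sum>i<d. \<Sum>j<d. u i * u j * (std_basis i \<bullet> H (std_basis j)))"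
proof -
  have "H (vec_of d u) = (\<Sum>j<d. u j *\<^sub>R H (std_basis j))"
    unfolding vec_of_eq_sum_std_basis using assms by (simp add: linear_sum linear_scale o_def)
  then have "vec_of d u \<bullet> H (vec_of d u) =
      (\<Sum>j<d. \<Sum>i<d. u i * u j * (std_basis i \<bullet> H (std_basis j)))"
    by (simp add: vec_of_eq_sum_std_basis inner_sum_left inner_sum_right sum_distrib_left mult_ac)
  also have "\<dots> = (\<Sum>i<d. \<Sum>j<d. u i * u j * (std_basis i \<bullet> H (std_basis j)))"
    by (rule sum.swap)
  finally show ?thesis .
qed

lemma continuous_on_vec_of: "continuous_on UNIV (\<lambda>z::nat \<Rightarrow> real. vec_of d z)"
proof -
  have "continuous_on UNIV (\<lambda>z::nat \<Rightarrow> real. \<Sum>i<d. z i *\<^sub>R std_basis i)"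
    by (intro continuous_on_sum continuous_on_scaleR continuous_on_const
        continuous_on_product_coordinates)
  then show ?thesis by (simp add: vec_of_eq_sum_std_basis)
qed

section \<open>The standard Gaussian measure on R^d\<close>

lemma prob_space_std_normal: "prob_space std_normal_distribution"
  by (rule prob_space_normal_density) simp

lemma prob_space_gauss: "prob_space (gauss d)"
  unfolding gauss_def by (rule prob_space_PiM) (rule prob_space_std_normal)

lemma space_gauss: "space (gauss d) = (\<Pi>\<^sub>E i\<in>{..<d}. UNIV)"
  by (simp add: gauss_def space_PiM)

lemma integrable_const_gauss: "integrable (gauss d) (\<lambda>_. c::real)"
proof -
  interpret prob_space "gauss d" by (rule prob_space_gauss)
  show ?thesis by simp
qed

lemma measurable_gauss_coordinate:
  "i < d \<Longrightarrow> (\<lambda>u. u i) \<in> measurable (gauss d) std_normal_distribution"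
  unfolding gauss_def by (intro measurable_component_singleton) auto

lemma borel_measurable_gauss_coordinate [measurable]:
  "i < d \<Longrightarrow> (\<lambda>u. u i) \<in> borel_measurable (gauss d)"
  using measurable_gauss_coordinate measurable_cong_sets[OF refl, of _ borel] by simp

lemma distr_gauss_coordinate:
  assumes "i < d"
  shows "distr (gauss d) std_normal_distribution (\<lambda>u. u i) = std_normal_distribution"
proof -
  interpret product_prob_space "\<lambda>_::nat. std_normal_distribution" "{..<d}"
    by (intro product_prob_spaceI prob_space_std_normal)
  show ?thesis unfolding gauss_def using assms by (intro PiM_component) auto
qed

lemma integrable_gauss_coordinate:
  fixes g :: "real \<Rightarrow> real"
  assumes "i < d" "integrable std_normal_distribution g"
  shows "integrable (gauss d) (\<lambda>u. g (u i))"
  using assms measurable_gauss_coordinate[OF assms(1)]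
  by (subst integrable_distr_eq[symmetric]) (auto simp: distr_gauss_coordinate)

lemma integral_gauss_coordinate:
  fixes g :: "real \<Rightarrow> real"
  assumes "i < d" "g \<in> borel_measurable borel"
  shows "(\<integral>u. g (u i) \<partial>gauss d) = integral\<^sup>L std_normal_distribution g"
proof -
  have "(\<integral>u. g (u i) \<partial>gauss d) =
      integral\<^sup>L (distr (gauss d) std_normal_distribution (\<lambda>u. u i)) g"
    using measurable_gauss_coordinate[OF assms(1)] assms(2) by (subst integral_distr) auto
  then show ?thesis using distr_gauss_coordinate[OF assms(1)] by simp
qed

lemma gauss_coordinate_product:
  fixes f :: "nat \<Rightarrow> real \<Rightarrow> real"
  assumes "\<And>i. i < d \<Longrightarrow> integrable std_normal_distribution (f i)"
  shows "integrable (gauss d) (\<lambda>u. \<Prod>i<d. f i (u i))"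
    and "(\<integral>u. (\<Prod>i<d. f i (u i)) \<partial>gauss d) = (\<Prod>i<d. integral\<^sup>L std_normal_distribution (f i))"
proof -
  interpret product_prob_space "\<lambda>_::nat. std_normal_distribution" "{..<d}"
    by (intro product_prob_spaceI prob_space_std_normal)
  show "integrable (gauss d) (\<lambda>u. \<Prod>i<d. f i (u i))"
    unfolding gauss_def by (rule product_integrable_prod) (auto intro: assms)
  show "(\<integral>u. (\<Prod>i<d. f i (u i)) \<partial>gauss d) = (\<Prod>i<d. integral\<^sup>L std_normal_distribution (f i))"
    unfolding gauss_def by (rule product_integral_prod) (auto intro: assms)
qed

lemma gauss_coordinate_covariance:
  assumes "i < d" "j < d"
  shows "integrable (gauss d) (\<lambda>u. u i * u j)"
    and "(\<integral>u. u i * u j \<partial>gauss d) = (if i = j then 1 else 0)"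
proof -
  have "integrable (gauss d) (\<lambda>u. u i * u j) \<and> (\<integral>u. u i * u j \<partial>gauss d) = 1" if "i = j"
  proof -
    have "integrable std_normal_distribution (\<lambda>x. x\<^sup>2)"
      by (rule integrable_std_normal_distribution_moment)
    moreover have "integral\<^sup>L std_normal_distribution (\<lambda>x. x\<^sup>2) = 1"
      using std_normal_distribution_even_moments(1)[of 1] by simp
    ultimately show ?thesis
      using that assms integrable_gauss_coordinate[of i d "\<lambda>x. x\<^sup>2"]
        integral_gauss_coordinate[of i d "\<lambda>x. x\<^sup>2"]
      by (simp add: power2_eq_square)
  qed
  moreover have "integrable (gauss d) (\<lambda>u. u i * u j) \<and> (\<integral>u. u i * u j \<partial>gauss d) = 0"
    if "i \<noteq> j"
  proof -
    define f where "f = (\<lambda>k (x::real). if k = i \<or> k = j then x else 1)"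
    have prod_f: "(\<Prod>k<d. f k (u k)) = u i * u j" for u
    proof -
      have "(\<Prod>k<d. f k (u k)) = (\<Prod>k\<in>{i,j}. f k (u k)) * (\<Prod>k\<in>{..<d}-{i,j}. f k (u k))"
        using assms by (subst prod.subset_diff[of "{i,j}"]) auto
      also have "(\<Prod>k\<in>{..<d}-{i,j}. f k (u k)) = 1" by (intro prod.neutral) (auto simp: f_def)
      finally show ?thesis using that by (simp add: f_def)
    qed
    interpret std_normal: prob_space std_normal_distribution by (rule prob_space_std_normal)
    have int: "integrable std_normal_distribution (f k)" for k
      using integrable_std_normal_distribution_moment[of 1] by (cases "k = i \<or> k = j") (auto simp: f_def)
    have "integral\<^sup>L std_normal_distribution (\<lambda>x. x) = 0"
      using integral_std_normal_distribution_moment_odd[of 1] by simp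
    then have "(\<Prod>k<d. integral\<^sup>L std_normal_distribution (f k)) = 0"
      using assms by (intro prod_zero bexI[of _ i]) (auto simp: f_def)
    then show ?thesis
      using gauss_coordinate_product[of d f] int by (simp add: prod_f)
  qed
  ultimately show "integrable (gauss d) (\<lambda>u. u i * u j)"
    and "(\<integral>u. u i * u j \<partial>gauss d) = (if i = j then 1 else 0)"
    by auto
qed

lemma borel_measurable_vec_of:
  fixes F :: "fvec \<Rightarrow> real"
  assumes "continuous_on (Rd d) F"
  shows "(\<lambda>u. F (vec_of d u)) \<in> borel_measurable (gauss d)"
proof -
  define E where "E = (\<lambda>(u::nat\<Rightarrow>real) (i::nat). if i < d then u i else 0)"
  have E: "E \<in> measurable (gauss d) (Pi\<^sub>M UNIV (\<lambda>_. borel :: real measure))"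
    unfolding E_def
  proof (rule measurable_PiM_single')
    fix i :: nat
    show "(\<lambda>u. if i < d then u i else 0) \<in> borel_measurable (gauss d)"
      by (cases "i < d") auto
  qed auto
  define G where "G = (\<lambda>z. F (vec_of d z))"
  have "continuous_on UNIV G"
    unfolding G_def by (rule continuous_on_compose2[OF assms continuous_on_vec_of]) auto
  then have "G \<in> borel_measurable (Pi\<^sub>M UNIV (\<lambda>_::nat. borel :: real measure))"
    using borel_measurable_continuous_onI measurable_cong_sets[OF sets_PiM_equal_borel refl]
    by blast
  then have "(\<lambda>u. G (E u)) \<in> borel_measurable (gauss d)"
    using E by (rule measurable_compose[rotated])
  moreover have "G (E u) = F (vec_of d u)" for u
    unfolding G_def E_def by (rule arg_cong[of _ _ F], rule vec_of_cong) simp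
  ultimately show ?thesis by simp
qed

lemma borel_measurable_norm_vec_of: "(\<lambda>u. norm (vec_of d u)) \<in> borel_measurable (gauss d)"
  by (rule borel_measurable_vec_of) (rule continuous_on_norm_id)

lemma gauss_power2_norm:
  shows "integrable (gauss d) (\<lambda>u. (norm (vec_of d u))\<^sup>2)"
    and "(\<integral>u. (norm (vec_of d u))\<^sup>2 \<partial>gauss d) = real d"
proof -
  have int: "integrable (gauss d) (\<lambda>u. (u i)\<^sup>2)" if "i < d" for i
    using gauss_coordinate_covariance(1)[OF that that] by (simp add: power2_eq_square)
  show "integrable (gauss d) (\<lambda>u. (norm (vec_of d u))\<^sup>2)"
    unfolding power2_norm_vec_of by (rule Bochner_Integration.integrable_sum) (auto intro: int)
  have "(\<integral>u. (norm (vec_of d u))\<^sup>2 \<partial>gauss d) = (\<Sum>i<d. \<integral>u. (u i)\<^sup>2 \<partial>gauss d)"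
    unfolding power2_norm_vec_of by (rule Bochner_Integration.integral_sum) (auto intro: int)
  also have "\<dots> = real d" by (simp add: gauss_coordinate_covariance(2) power2_eq_square)
  finally show "(\<integral>u. (norm (vec_of d u))\<^sup>2 \<partial>gauss d) = real d" .
qed

lemma integrable_norm_vec_of: "integrable (gauss d) (\<lambda>u. norm (vec_of d u))"
proof (rule Bochner_Integration.integrable_bound[OF Bochner_Integration.integrable_add
      [OF integrable_const_gauss gauss_power2_norm(1)] borel_measurable_norm_vec_of])
  have "t \<le> 1 + t\<^sup>2" for t :: real
    using sum_power2_ge_zero[of "t - 1/2" 0] by (simp add: power2_eq_square algebra_simps)
  then show "AE u in gauss d. norm (norm (vec_of d u)) \<le> norm (1 + (norm (vec_of d u))\<^sup>2)"
    by (intro AE_I2) simp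
qed

lemma integrable_gauss_norm_bound:
  fixes f :: "(nat \<Rightarrow> real) \<Rightarrow> real"
  assumes "f \<in> borel_measurable (gauss d)"
    and "\<And>u. \<bar>f u\<bar> \<le> A + B * norm (vec_of d u) + C * (norm (vec_of d u))\<^sup>2"
  shows "integrable (gauss d) f"
proof (rule Bochner_Integration.integrable_bound[OF _ assms(1)])
  show "integrable (gauss d) (\<lambda>u. A + B * norm (vec_of d u) + C * (norm (vec_of d u))\<^sup>2)"
    by (intro Bochner_Integration.integrable_add Bochner_Integration.integrable_mult_right
        integrable_const_gauss integrable_norm_vec_of gauss_power2_norm)
  show "AE u in gauss d. norm (f u) \<le> norm (A + B * norm (vec_of d u) + C * (norm (vec_of d u))\<^sup>2)"
    using assms(2) by (intro AE_I2) (smt (verit) real_norm_def)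
qed

lemma gauss_quadratic_form:
  assumes "linear H"
  shows "integrable (gauss d) (\<lambda>u. vec_of d u \<bullet> H (vec_of d u))"
    and "(\<integral>u. vec_of d u \<bullet> H (vec_of d u) \<partial>gauss d) = trace_op d H"
proof -
  have int: "integrable (gauss d) (\<lambda>u. u i * u j * c)" if "i < d" "j < d" for i j c
    using gauss_coordinate_covariance(1)[OF that] by simp
  show "integrable (gauss d) (\<lambda>u. vec_of d u \<bullet> H (vec_of d u))"
    unfolding quadratic_form_vec_of[OF assms]
    by (auto intro!: Bochner_Integration.integrable_sum int)
  have "(\<integral>u. vec_of d u \<bullet> H (vec_of d u) \<partial>gauss d) =
      (\<Sum>i<d. \<Sum>j<d. (\<integral>u. u i * u j \<partial>gauss d) * (std_basis i \<bullet> H (std_basis j)))"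
    unfolding quadratic_form_vec_of[OF assms]
    by (subst Bochner_Integration.integral_sum, fastforce intro!: Bochner_Integration.integrable_sum int,
        intro sum.cong refl, subst Bochner_Integration.integral_sum)
       (auto intro!: int gauss_coordinate_covariance(1))
  also have "\<dots> = (\<Sum>i<d. std_basis i \<bullet> H (std_basis i))"
    by (simp add: gauss_coordinate_covariance(2) if_distrib[of "\<lambda>x. x * _"] cong: if_cong)
  finally show "(\<integral>u. vec_of d u \<bullet> H (vec_of d u) \<partial>gauss d) = trace_op d H"
    by (simp add: trace_op_def)
qed

lemma distr_std_normal_uminus:
  "distr std_normal_distribution std_normal_distribution uminus = std_normal_distribution"
proof (rule measure_eqI)
  show "sets (distr std_normal_distribution std_normal_distribution uminus) =
      sets std_normal_distribution" by simp
  fix A assume "A \<in> sets (distr std_normal_distribution std_normal_distribution uminus)"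
  then have A[measurable]: "A \<in> sets borel" by simp
  define g where "g = (\<lambda>x::real. ennreal (std_normal_density x) * indicator A x)"
  have gm: "g \<in> borel_measurable borel" unfolding g_def by measurable
  have sym: "std_normal_density (- x) = std_normal_density x" for x
    by (simp add: normal_density_def)
  have um: "(uminus :: real \<Rightarrow> real) \<in> measurable std_normal_distribution std_normal_distribution"
    using measurable_cong_sets[of std_normal_distribution borel std_normal_distribution borel] by simp
  have "emeasure (distr std_normal_distribution std_normal_distribution uminus) A =
      emeasure std_normal_distribution (uminus -` A \<inter> space std_normal_distribution)"
    by (rule emeasure_distr[OF um]) (simp add: A)
  also have "\<dots> = emeasure std_normal_distribution (uminus -` A)" by simp
  also have "\<dots> = (\<integral>\<^sup>+ x. ennreal (std_normal_density x) * indicator (uminus -` A) x \<partial>lborel)"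
  proof (rule emeasure_density)
    have "uminus -` A \<inter> space lborel \<in> sets lborel"
      by (rule measurable_sets[OF _ A]) simp
    then show "uminus -` A \<in> sets lborel" by simp
  qed simp
  also have "\<dots> = (\<integral>\<^sup>+ x. g (- x) \<partial>lborel)"
    unfolding g_def by (intro nn_integral_cong) (simp add: sym indicator_def)
  also have "\<dots> = (\<integral>\<^sup>+ x. g x \<partial>distr lborel borel uminus)"
    by (rule nn_integral_distr[symmetric]) (auto simp: gm)
  also have "\<dots> = (\<integral>\<^sup>+ x. g x \<partial>lborel)" by (simp add: lborel_distr_uminus)
  also have "\<dots> = emeasure std_normal_distribution A"
    unfolding g_def by (rule emeasure_density[symmetric]) auto
  finally show "emeasure (distr std_normal_distribution std_normal_distribution uminus) A =
      emeasure std_normal_distribution A" .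
qed

lemma measurable_gauss_reflect: "compose {..<d} uminus \<in> measurable (gauss d) (gauss d)"
proof -
  have "(\<lambda>u i. if i \<in> {..<d} then - (u i :: real) else undefined)
      \<in> measurable (gauss d) (Pi\<^sub>M {..<d} (\<lambda>_. std_normal_distribution))"
  proof (rule measurable_PiM_single')
    fix i assume "i \<in> {..<d}"
    then show "(\<lambda>u. if i \<in> {..<d} then - u i else undefined)
        \<in> measurable (gauss d) std_normal_distribution"
      using measurable_cong_sets[OF refl, of _ std_normal_distribution borel] by simp
  qed (auto simp: space_gauss)
  then show ?thesis unfolding gauss_def compose_def restrict_def by simp
qed

lemma distr_gauss_reflect: "distr (gauss d) (gauss d) (compose {..<d} uminus) = gauss d"
proof -
  have "distr (gauss d) (gauss d) (compose {..<d} uminus) =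
      Pi\<^sub>M {..<d} (\<lambda>i. distr std_normal_distribution std_normal_distribution uminus)"
    unfolding gauss_def
    by (rule distr_PiM_finite_prob_space') (auto intro: prob_space_std_normal)
  then show ?thesis by (simp add: distr_std_normal_uminus gauss_def)
qed

lemma gauss_reflect:
  fixes F :: "fvec \<Rightarrow> real"
  assumes "(\<lambda>u. F (vec_of d u)) \<in> borel_measurable (gauss d)"
  shows "integrable (gauss d) (\<lambda>u. F (- vec_of d u)) \<longleftrightarrow> integrable (gauss d) (\<lambda>u. F (vec_of d u))"
    and "(\<integral>u. F (- vec_of d u) \<partial>gauss d) = (\<integral>u. F (vec_of d u) \<partial>gauss d)"
proof -
  have reflect: "vec_of d (compose {..<d} uminus u) = - vec_of d u" for u
    by (subst vec_of_uminus[symmetric], rule vec_of_cong) (simp add: compose_def)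
  have "integrable (gauss d) (\<lambda>u. F (vec_of d u)) \<longleftrightarrow>
      integrable (distr (gauss d) (gauss d) (compose {..<d} uminus)) (\<lambda>u. F (vec_of d u))"
    by (simp add: distr_gauss_reflect)
  also have "\<dots> \<longleftrightarrow> integrable (gauss d) (\<lambda>u. F (- vec_of d u))"
    by (subst integrable_distr_eq[OF measurable_gauss_reflect assms]) (simp add: reflect)
  finally show "integrable (gauss d) (\<lambda>u. F (- vec_of d u)) \<longleftrightarrow>
      integrable (gauss d) (\<lambda>u. F (vec_of d u))" by simp
  have "(\<integral>u. F (vec_of d u) \<partial>gauss d) =
      (\<integral>u. F (vec_of d u) \<partial>distr (gauss d) (gauss d) (compose {..<d} uminus))"
    by (simp add: distr_gauss_reflect)
  also have "\<dots> = (\<integral>u. F (- vec_of d u) \<partial>gauss d)"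
    by (subst integral_distr[OF measurable_gauss_reflect assms]) (simp add: reflect)
  finally show "(\<integral>u. F (- vec_of d u) \<partial>gauss d) = (\<integral>u. F (vec_of d u) \<partial>gauss d)" by simp
qed

lemma integral_gauss_le_half_symmetric:
  fixes F G :: "fvec \<Rightarrow> real"
  assumes "(\<lambda>u. F (vec_of d u)) \<in> borel_measurable (gauss d)"
    and "integrable (gauss d) (\<lambda>u. F (vec_of d u))" "integrable (gauss d) (\<lambda>u. G (vec_of d u))"
    and "\<And>y. y \<in> Rd d \<Longrightarrow> F y + F (- y) \<le> G y"
  shows "(\<integral>u. F (vec_of d u) \<partial>gauss d) \<le> (\<integral>u. G (vec_of d u) \<partial>gauss d) / 2"
proof -
  have reflected: "integrable (gauss d) (\<lambda>u. F (- vec_of d u))"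
    using gauss_reflect(1)[OF assms(1)] assms(2) by simp
  have "2 * (\<integral>u. F (vec_of d u) \<partial>gauss d) = (\<integral>u. F (vec_of d u) + F (- vec_of d u) \<partial>gauss d)"
    using gauss_reflect(2)[OF assms(1)] Bochner_Integration.integral_add[OF assms(2) reflected]
    by simp
  also have "\<dots> \<le> (\<integral>u. G (vec_of d u) \<partial>gauss d)"
    using assms(4) by (intro integral_mono Bochner_Integration.integrable_add assms(2,3) reflected) auto
  finally show ?thesis by simp
qed

lemma integral_sqrt_le_sqrt_integral:
  assumes "prob_space M" "integrable M f" "\<And>x. 0 \<le> f x" "integrable M (\<lambda>x. sqrt (f x))"
  shows "(\<integral>x. sqrt (f x) \<partial>M) \<le> sqrt (\<integral>x. f x \<partial>M)"
proof -
  interpret prob_space M by fact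
  define a where "a = (\<integral>x. f x \<partial>M)"
  have a0: "0 \<le> a" unfolding a_def using assms(3) by (simp add: integral_nonneg)
  have am_gm: "(\<integral>x. sqrt (f x) \<partial>M) \<le> (a / t + t) / 2" if "0 < t" for t
  proof -
    have "sqrt y \<le> (y / t + t) / 2" if "0 \<le> y" for y
    proof -
      have "0 \<le> (sqrt y - t)\<^sup>2" by simp
      then have "2 * t * sqrt y \<le> y + t\<^sup>2" using that by (simp add: power2_eq_square algebra_simps)
      then show ?thesis using \<open>0 < t\<close> by (simp add: field_simps power2_eq_square)
    qed
    then have "(\<integral>x. sqrt (f x) \<partial>M) \<le> (\<integral>x. (f x / t + t) / 2 \<partial>M)"
      using assms by (intro integral_mono) auto
    also have "\<dots> = (a / t + t) / 2" using assms(2) unfolding a_def by (simp add: prob_space)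
    finally show ?thesis .
  qed
  show ?thesis
  proof (cases "a = 0")
    case False
    then have "0 < sqrt a" using a0 by simp
    from am_gm[OF this] have "(\<integral>x. sqrt (f x) \<partial>M) \<le> (a / sqrt a + sqrt a) / 2" .
    also have "a / sqrt a = sqrt a" using a0 by (simp add: real_div_sqrt)
    finally show ?thesis unfolding a_def by simp
  next
    case True
    have "(\<integral>x. sqrt (f x) \<partial>M) \<le> t" if "0 < t" for t
      using am_gm[of "2*t"] that True by simp
    then have "(\<integral>x. sqrt (f x) \<partial>M) \<le> 0" by (meson dense not_le)
    then show ?thesis using True unfolding a_def by simp
  qed
qed

lemma std_normal_exp_quarter_square:
  shows "integrable std_normal_distribution (\<lambda>x. exp (x\<^sup>2 / 4))"
    and "integral\<^sup>L std_normal_distribution (\<lambda>x. exp (x\<^sup>2 / 4)) = sqrt 2"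
proof -
  have density: "std_normal_density x * exp (x\<^sup>2 / 4) = sqrt 2 * normal_density 0 (sqrt 2) x" for x
  proof -
    have "exp (- x\<^sup>2 / 2) * exp (x\<^sup>2 / 4) = exp (- x\<^sup>2 / 4)" by (simp add: exp_add[symmetric])
    then have "std_normal_density x * exp (x\<^sup>2 / 4) = 1 / sqrt (2 * pi) * exp (- x\<^sup>2 / 4)"
      unfolding normal_density_def by (simp add: mult.assoc)
    also have "\<dots> = sqrt 2 * normal_density 0 (sqrt 2) x"
      unfolding normal_density_def by (simp add: real_sqrt_mult field_simps)
    finally show ?thesis .
  qed
  have m: "(\<lambda>x::real. exp (x\<^sup>2 / 4)) \<in> borel_measurable borel" by measurable
  have "integrable lborel (\<lambda>x. sqrt 2 * normal_density 0 (sqrt 2) x)" by simp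
  then show "integrable std_normal_distribution (\<lambda>x. exp (x\<^sup>2 / 4))"
    by (subst integrable_density) (auto simp: density m)
  have "integral\<^sup>L std_normal_distribution (\<lambda>x. exp (x\<^sup>2 / 4)) =
      (\<integral>x. sqrt 2 * normal_density 0 (sqrt 2) x \<partial>lborel)"
    by (subst integral_density) (auto simp: density m)
  then show "integral\<^sup>L std_normal_distribution (\<lambda>x. exp (x\<^sup>2 / 4)) = sqrt 2" by simp
qed

lemma gauss_exp_quarter_norm_square:
  shows "integrable (gauss d) (\<lambda>u. exp ((norm (vec_of d u))\<^sup>2 / 4))"
    and "(\<integral>u. exp ((norm (vec_of d u))\<^sup>2 / 4) \<partial>gauss d) = sqrt 2 ^ d"
proof -
  have "exp ((norm (vec_of d u))\<^sup>2 / 4) = (\<Prod>i<d. exp ((u i)\<^sup>2 / 4))" for u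
    unfolding power2_norm_vec_of by (simp add: sum_divide_distrib exp_sum)
  then show "integrable (gauss d) (\<lambda>u. exp ((norm (vec_of d u))\<^sup>2 / 4))"
    and "(\<integral>u. exp ((norm (vec_of d u))\<^sup>2 / 4) \<partial>gauss d) = sqrt 2 ^ d"
    using gauss_coordinate_product[of d "\<lambda>_ x. exp (x\<^sup>2 / 4)"] std_normal_exp_quarter_square
    by auto
qed

lemma mult_exp_neg_antimono: "1 \<le> (d::real) \<Longrightarrow> d \<le> t \<Longrightarrow> t * exp (- t) \<le> d * exp (- d)"
proof -
  assume d: "1 \<le> d" and t: "d \<le> t"
  have "t \<le> d * (1 + (t - d))"
    using mult_nonneg_nonneg[of "d - 1" "t - d"] d t by (simp add: algebra_simps)
  also have "\<dots> \<le> d * exp (t - d)"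
    using d by (intro mult_left_mono exp_ge_add_one_self) auto
  finally have "t * exp (- t) \<le> d * exp (t - d) * exp (- t)" by (rule mult_right_mono) auto
  also have "\<dots> = d * exp (- d)" by (simp add: mult.assoc exp_add[symmetric])
  finally show ?thesis .
qed

lemma linear_le_exp_quarter_square:
  fixes d t :: real
  assumes d: "1 \<le> d" and t: "2 * sqrt d < t"
  shows "t \<le> 2 * sqrt d * exp (- d) * exp (t\<^sup>2 / 4)"
proof -
  have sd: "0 < sqrt d" using d by simp
  have "(2 * sqrt d)\<^sup>2 < t\<^sup>2" using t sd by (intro power_strict_mono) auto
  then have "d \<le> t\<^sup>2 / 4" using d by (simp add: power_mult_distrib)
  then have "t\<^sup>2 / 4 * exp (- (t\<^sup>2 / 4)) \<le> d * exp (- d)"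
    using d by (intro mult_exp_neg_antimono) auto
  then have "t * t \<le> 4 * d * exp (- d) * exp (t\<^sup>2 / 4)"
    by (simp add: exp_minus field_simps power2_eq_square)
  also have "4 * d = (2 * sqrt d) * (2 * sqrt d)" using d by simp
  also have "\<dots> * exp (- d) * exp (t\<^sup>2 / 4) \<le> t * (2 * sqrt d * exp (- d) * exp (t\<^sup>2 / 4))"
    using t sd by (auto simp: mult_ac intro!: mult_right_mono)
  finally show ?thesis using t sd by (simp add: mult_le_cancel_left_pos)
qed

text \<open>Chernoff-type estimate: on the tail, |u| is dominated by
  2 sqrt d e^-d e^(|u|^2/4), and E e^(|u|^2/4) = sqrt 2 ^ d.\<close>

lemma gauss_norm_tail:
  assumes "1 \<le> d"
  defines "tail \<equiv> \<lambda>u. if 2 * sqrt (real d) < norm (vec_of d u) then norm (vec_of d u) else 0"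
  shows "integrable (gauss d) tail"
    and "(\<integral>u. tail u \<partial>gauss d) \<le> 2 * sqrt (real d) * exp (- real d / 2)"
proof -
  let ?n = "\<lambda>u. norm (vec_of d u)"
  define C where "C = 2 * sqrt (real d) * exp (- real d)"
  have sd: "0 < sqrt (real d)" using assms by simp
  have tail_le: "tail u \<le> C * exp ((?n u)\<^sup>2 / 4)" for u
    using linear_le_exp_quarter_square[of "real d" "?n u"] assms
    unfolding tail_def C_def by auto
  have tail_measurable: "tail \<in> borel_measurable (gauss d)"
    unfolding tail_def using borel_measurable_norm_vec_of by measurable
  have bound: "integrable (gauss d) (\<lambda>u. C * exp ((?n u)\<^sup>2 / 4))"
    using gauss_exp_quarter_norm_square(1) by simp
  have "norm (tail u) \<le> norm (C * exp ((?n u)\<^sup>2 / 4))" for u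
    using tail_le[of u] by (simp add: tail_def C_def)
  then show int: "integrable (gauss d) tail"
    by (intro Bochner_Integration.integrable_bound[OF bound tail_measurable] AE_I2)
  have "(\<integral>u. tail u \<partial>gauss d) \<le> (\<integral>u. C * exp ((?n u)\<^sup>2 / 4) \<partial>gauss d)"
    by (rule integral_mono[OF int bound tail_le])
  also have "\<dots> = 2 * sqrt (real d) * (exp (- real d) * sqrt 2 ^ d)"
    using gauss_exp_quarter_norm_square(2) by (simp add: C_def)
  also have "exp (- real d) * sqrt 2 ^ d \<le> exp (- real d / 2)"
  proof -
    have "sqrt 2 \<le> sqrt (exp 1)" using exp_ge_add_one_self[of 1] by simp
    also have "sqrt (exp 1) = exp (1/2::real)"
      by (rule real_sqrt_unique) (simp_all add: power2_eq_square exp_add[symmetric])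
    finally have "sqrt 2 ^ d \<le> exp (real d / 2)"
      using power_mono[of "sqrt 2" "exp (1/2)" d] by (simp add: exp_of_nat_mult[symmetric])
    then have "exp (- real d) * sqrt 2 ^ d \<le> exp (- real d) * exp (real d / 2)" by simp
    also have "\<dots> = exp (- real d / 2)" by (simp add: exp_add[symmetric])
    finally show ?thesis .
  qed
  finally show "(\<integral>u. tail u \<partial>gauss d) \<le> 2 * sqrt (real d) * exp (- real d / 2)"
    using sd by simp
qed

section \<open>Differential calculus on R^d\<close>

lemma has_vector_derivative_along_line:
  fixes F :: "fvec \<Rightarrow> 'b::real_normed_vector"
  assumes F: "(F has_derivative F') (at (y0 + \<tau> *\<^sub>R a) within Rd d)"
    and "y0 \<in> Rd d" "a \<in> Rd d"
  shows "((\<lambda>t. F (y0 + t *\<^sub>R a)) has_vector_derivative F' a) (at \<tau>)"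
proof -
  define l where "l = (\<lambda>t::real. y0 + t *\<^sub>R a)"
  have l: "(l has_derivative (\<lambda>h. h *\<^sub>R a)) (at \<tau> within UNIV)"
    unfolding l_def by (auto intro!: derivative_eq_intros)
  have "range l \<subseteq> Rd d" unfolding l_def using assms(2,3) by auto
  then have "(F has_derivative F') (at (l \<tau>) within range l)"
    using has_derivative_subset[OF F] by (simp add: l_def)
  from diff_chain_within[OF l this]
  have "((F \<circ> l) has_derivative (F' \<circ> (\<lambda>h. h *\<^sub>R a))) (at \<tau>)" by simp
  moreover have "F' \<circ> (\<lambda>h. h *\<^sub>R a) = (\<lambda>h. h *\<^sub>R F' a)"
    using has_derivative_linear[OF F] by (auto simp: o_def linear_scale)
  ultimately show ?thesis unfolding has_vector_derivative_def l_def by (simp add: o_def)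
qed

lemma has_real_derivative_along_line:
  fixes F :: "fvec \<Rightarrow> real"
  assumes "(F has_derivative F') (at (y0 + \<tau> *\<^sub>R a) within Rd d)" "y0 \<in> Rd d" "a \<in> Rd d"
  shows "((\<lambda>t. F (y0 + t *\<^sub>R a)) has_real_derivative F' a) (at \<tau>)"
  using has_vector_derivative_along_line[OF assms]
  by (simp add: has_real_derivative_iff_has_vector_derivative)

lemma has_grad_along_line:
  assumes "has_grad d f (g (y0 + \<tau> *\<^sub>R a)) (y0 + \<tau> *\<^sub>R a)" "y0 \<in> Rd d" "a \<in> Rd d"
  shows "((\<lambda>t. f (y0 + t *\<^sub>R a)) has_real_derivative g (y0 + \<tau> *\<^sub>R a) \<bullet> a) (at \<tau>)"
  using assms by (intro has_real_derivative_along_line[of f]) (auto simp: has_grad_def)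

lemma has_grad_unique:
  assumes "has_grad d f g1 x" "has_grad d f g2 x" "x \<in> Rd d"
  shows "g1 = g2"
proof -
  define a where "a = g1 - g2"
  have a: "a \<in> Rd d" using assms unfolding a_def by (auto simp: has_grad_def)
  have "g1 \<bullet> a = g2 \<bullet> a"
    using has_grad_along_line[of d f "\<lambda>_. g1" x 0 a] has_grad_along_line[of d f "\<lambda>_. g2" x 0 a]
      assms a by (auto intro: DERIV_unique)
  then have "a \<bullet> a = 0" unfolding a_def by (simp add: inner_diff_left)
  then show ?thesis unfolding a_def by simp
qed

lemma continuous_on_has_grad:
  assumes "\<And>y. y \<in> Rd d \<Longrightarrow> has_grad d f (g y) y"
  shows "continuous_on (Rd d) f"
  unfolding continuous_on_eq_continuous_within
  using assms by (auto simp: has_grad_def intro: has_derivative_continuous)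

lemma continuous_on_shift_Rd:
  fixes F :: "fvec \<Rightarrow> 'b::topological_space"
  assumes "continuous_on (Rd d) F" "\<theta> \<in> Rd d"
  shows "continuous_on (Rd d) (\<lambda>y. F (\<theta> + \<mu> *\<^sub>R y))"
  by (rule continuous_on_compose2[OF assms(1)]) (use assms(2) in \<open>auto intro!: continuous_intros\<close>)

lemma lipschitz_on_Rd_normD:
  "L-lipschitz_on (Rd d) g \<Longrightarrow> y \<in> Rd d \<Longrightarrow> z \<in> Rd d \<Longrightarrow> norm (g y - g z) \<le> L * norm (y - z)"
  using lipschitz_onD by (fastforce simp: dist_norm)

lemma lipschitz_gradient_taylor:
  fixes f :: "fvec \<Rightarrow> real"
  assumes grad: "\<And>y. y \<in> Rd d \<Longrightarrow> has_grad d f (g y) y"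
    and lip: "L-lipschitz_on (Rd d) g" and y: "y \<in> Rd d" and h: "h \<in> Rd d"
  shows "\<bar>f (y + h) - f y - g y \<bullet> h\<bar> \<le> L * (norm h)\<^sup>2"
proof -
  define \<phi> where "\<phi> = (\<lambda>t. f (y + t *\<^sub>R h) - t * (g y \<bullet> h))"
  have der: "DERIV \<phi> t :> g (y + t *\<^sub>R h) \<bullet> h - g y \<bullet> h" for t
  proof -
    have "y + t *\<^sub>R h \<in> Rd d" using y h by auto
    from has_grad_along_line[of d f g, OF grad[OF this] y h]
    show ?thesis unfolding \<phi>_def by (auto intro!: derivative_eq_intros)
  qed
  then obtain z where z: "0 < z" "z < 1" "\<phi> 1 - \<phi> 0 = (1 - 0) * (g (y + z *\<^sub>R h) \<bullet> h - g y \<bullet> h)"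
    using MVT2[of 0 1 \<phi> "\<lambda>t. g (y + t *\<^sub>R h) \<bullet> h - g y \<bullet> h"] der by auto
  have "\<bar>f (y + h) - f y - g y \<bullet> h\<bar> = \<bar>(g (y + z *\<^sub>R h) - g y) \<bullet> h\<bar>"
    using z(3) unfolding \<phi>_def by (simp add: inner_diff_left)
  also have "\<dots> \<le> norm (g (y + z *\<^sub>R h) - g y) * norm h" by (rule Cauchy_Schwarz_ineq2)
  also have "\<dots> \<le> (L * (z * norm h)) * norm h"
    using lipschitz_on_Rd_normD[OF lip, of "y + z *\<^sub>R h" y] y h z by (intro mult_right_mono) auto
  also have "\<dots> \<le> L * (norm h)\<^sup>2"
    using z lipschitz_on_nonneg[OF lip] mult_left_le_one_le[of "L * (norm h)\<^sup>2" z]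
    by (simp add: power2_eq_square mult_ac)
  finally show ?thesis .
qed

lemma has_derivative_of_quadratic_remainder:
  assumes "L > 0" and "\<And>h. h \<in> Rd d \<Longrightarrow> \<bar>f (\<theta> + h) - f \<theta> - g \<bullet> h\<bar> \<le> L * (norm h)\<^sup>2"
    and "\<theta> \<in> Rd d"
  shows "(f has_derivative (\<lambda>h. g \<bullet> h)) (at \<theta> within Rd d)"
  unfolding has_derivative_within_alt
proof (intro conjI allI impI bounded_linear_inner_right)
  fix e :: real assume e: "0 < e"
  show "\<exists>\<delta>>0. \<forall>y\<in>Rd d. norm (y - \<theta>) < \<delta> \<longrightarrow>
      norm (f y - f \<theta> - g \<bullet> (y - \<theta>)) \<le> e * norm (y - \<theta>)"
  proof (intro exI[of _ "e / L"] conjI ballI impI)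
    show "0 < e / L" using e assms(1) by simp
    fix y assume y: "y \<in> Rd d" and close: "norm (y - \<theta>) < e / L"
    have "norm (f y - f \<theta> - g \<bullet> (y - \<theta>)) \<le> (L * norm (y - \<theta>)) * norm (y - \<theta>)"
      using assms(2)[of "y - \<theta>"] y assms(3) by (auto simp: power2_eq_square mult_ac)
    also have "\<dots> \<le> e * norm (y - \<theta>)"
      using close assms(1) by (intro mult_right_mono) (auto simp: field_simps)
    finally show "norm (f y - f \<theta> - g \<bullet> (y - \<theta>)) \<le> e * norm (y - \<theta>)" .
  qed
qed

lemma mixed_second_difference_mvt:
  fixes f :: "fvec \<Rightarrow> real"
  assumes grad: "\<And>y. y \<in> Rd d \<Longrightarrow> has_grad d f (g y) y"
    and p: "p \<in> Rd d" and a: "a \<in> Rd d" and b: "b \<in> Rd d" and s: "0 < s"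
  obtains \<xi> where "0 < \<xi>" "\<xi> < s"
    "f (p + s *\<^sub>R a + s *\<^sub>R b) - f (p + s *\<^sub>R a) - f (p + s *\<^sub>R b) + f p
       = s * ((g (p + s *\<^sub>R b + \<xi> *\<^sub>R a) - g (p + \<xi> *\<^sub>R a)) \<bullet> a)"
proof -
  define \<phi> where "\<phi> = (\<lambda>\<tau>. f (p + s *\<^sub>R b + \<tau> *\<^sub>R a) - f (p + \<tau> *\<^sub>R a))"
  have psb: "p + s *\<^sub>R b \<in> Rd d" using p b by auto
  have der: "DERIV \<phi> \<tau> :> g (p + s *\<^sub>R b + \<tau> *\<^sub>R a) \<bullet> a - g (p + \<tau> *\<^sub>R a) \<bullet> a" for \<tau>
  proof -
    have "p + s *\<^sub>R b + \<tau> *\<^sub>R a \<in> Rd d" "p + \<tau> *\<^sub>R a \<in> Rd d" using psb p a by auto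
    then show ?thesis unfolding \<phi>_def
      by (intro DERIV_diff has_grad_along_line[of d f g, OF grad psb a]
          has_grad_along_line[of d f g, OF grad p a])
  qed
  obtain \<xi> where "0 < \<xi>" "\<xi> < s"
    "\<phi> s - \<phi> 0 = (s - 0) * (g (p + s *\<^sub>R b + \<xi> *\<^sub>R a) \<bullet> a - g (p + \<xi> *\<^sub>R a) \<bullet> a)"
    using MVT2[of 0 s \<phi>, OF _ der] s by auto
  moreover have "\<phi> s - \<phi> 0 = f (p + s *\<^sub>R a + s *\<^sub>R b) - f (p + s *\<^sub>R a) - f (p + s *\<^sub>R b) + f p"
    unfolding \<phi>_def by (simp add: ac_simps)
  ultimately show ?thesis using that by (simp add: inner_diff_left)
qed

lemma mixed_second_difference_approx:
  fixes f :: "fvec \<Rightarrow> real"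
  assumes grad: "\<And>y. y \<in> Rd d \<Longrightarrow> has_grad d f (g y) y"
    and D: "(g has_derivative D) (at p within Rd d)" and p: "p \<in> Rd d"
    and a: "a \<in> Rd d" and b: "b \<in> Rd d" and e: "0 < e"
  shows "\<exists>\<delta>>0. \<forall>s. 0 < s \<and> s < \<delta> \<longrightarrow>
    \<bar>(f (p + s *\<^sub>R a + s *\<^sub>R b) - f (p + s *\<^sub>R a) - f (p + s *\<^sub>R b) + f p) - s\<^sup>2 * (a \<bullet> D b)\<bar>
      \<le> e * s\<^sup>2 * (norm a * (2 * norm a + norm b))"
proof -
  have lin: "linear D" using D by (rule has_derivative_linear)
  obtain \<delta>0 where \<delta>0: "\<delta>0 > 0"
    and approx: "\<And>y. y \<in> Rd d \<Longrightarrow> norm (y - p) < \<delta>0 \<Longrightarrow>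
      norm (g y - g p - D (y - p)) \<le> e * norm (y - p)"
    using D e unfolding has_derivative_within_alt by blast
  define K where "K = norm a + norm b + 1"
  have K: "0 < K" unfolding K_def by (simp add: add_nonneg_pos)
  show ?thesis
  proof (intro exI[of _ "\<delta>0 / K"] conjI allI impI)
    show "0 < \<delta>0 / K" using \<delta>0 K by simp
    fix s :: real assume s: "0 < s \<and> s < \<delta>0 / K"
    then have sK: "s * K < \<delta>0" using K by (simp add: field_simps)
    obtain \<xi> where \<xi>: "0 < \<xi>" "\<xi> < s"
      and mvt: "f (p + s *\<^sub>R a + s *\<^sub>R b) - f (p + s *\<^sub>R a) - f (p + s *\<^sub>R b) + f p
         = s * ((g (p + s *\<^sub>R b + \<xi> *\<^sub>R a) - g (p + \<xi> *\<^sub>R a)) \<bullet> a)"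
      using mixed_second_difference_mvt[OF grad p a b] s by blast
    define y1 where "y1 = p + s *\<^sub>R b + \<xi> *\<^sub>R a"
    define y2 where "y2 = p + \<xi> *\<^sub>R a"
    define r1 where "r1 = g y1 - g p - D (y1 - p)"
    define r2 where "r2 = g y2 - g p - D (y2 - p)"
    have y12: "y1 \<in> Rd d" "y2 \<in> Rd d" unfolding y1_def y2_def using p a b by auto
    have n1: "norm (y1 - p) \<le> s * norm a + s * norm b"
      unfolding y1_def using \<xi> norm_triangle_ineq[of "\<xi> *\<^sub>R a" "s *\<^sub>R b"]
        mult_right_mono[of \<xi> s "norm a"] s by (simp add: add.commute)
    have n2: "norm (y2 - p) \<le> s * norm a"
      unfolding y2_def using \<xi> by (simp add: mult_right_mono)
    have close1: "s * norm a + s * norm b < \<delta>0"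
      using sK s unfolding K_def by (simp add: algebra_simps)
    then have close2: "s * norm a < \<delta>0"
      using s by (smt (verit) mult_nonneg_nonneg norm_ge_zero)
    from close1 close2 have r12: "norm r1 \<le> e * (s * norm a + s * norm b)" "norm r2 \<le> e * (s * norm a)"
      unfolding r1_def r2_def using approx[OF y12(1)] approx[OF y12(2)] n1 n2 e
      by (meson le_less_trans mult_left_mono order_trans less_imp_le)+
    have "g y1 - g y2 = s *\<^sub>R D b + (r1 - r2)"
      unfolding r1_def r2_def y1_def y2_def using lin by (simp add: linear_diff linear_add linear_scale)
    then have "(g y1 - g y2) \<bullet> a = s * (D b \<bullet> a) + (r1 - r2) \<bullet> a"
      by (simp only: inner_add_left inner_scaleR_left)
    then have "s * ((g y1 - g y2) \<bullet> a) - s\<^sup>2 * (a \<bullet> D b) = s * ((r1 - r2) \<bullet> a)"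
      by (simp only: inner_commute[of "D b" a]) (simp add: power2_eq_square algebra_simps)
    moreover have "\<bar>(r1 - r2) \<bullet> a\<bar> \<le> e * s * (norm a * (2 * norm a + norm b))"
    proof -
      have "\<bar>(r1 - r2) \<bullet> a\<bar> \<le> (norm r1 + norm r2) * norm a"
        using Cauchy_Schwarz_ineq2[of "r1 - r2" a] norm_triangle_ineq4[of r1 r2]
        by (meson mult_right_mono norm_ge_zero order_trans)
      also have "\<dots> \<le> (e * (s * norm a + s * norm b) + e * (s * norm a)) * norm a"
        using r12 by (intro mult_right_mono add_mono) auto
      finally show ?thesis by (simp add: algebra_simps)
    qed
    ultimately have "\<bar>s * ((g y1 - g y2) \<bullet> a) - s\<^sup>2 * (a \<bullet> D b)\<bar>
        \<le> s * (e * s * (norm a * (2 * norm a + norm b)))"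
      using s by (simp add: abs_mult mult_left_mono)
    then show "\<bar>(f (p + s *\<^sub>R a + s *\<^sub>R b) - f (p + s *\<^sub>R a) - f (p + s *\<^sub>R b) + f p)
        - s\<^sup>2 * (a \<bullet> D b)\<bar> \<le> e * s\<^sup>2 * (norm a * (2 * norm a + norm b))"
      unfolding mvt y1_def[symmetric] y2_def[symmetric] by (simp add: power2_eq_square mult_ac)
  qed
qed

text \<open>A Schwarz-type symmetry that needs the gradient to be differentiable only at p: the mixed
  second difference of f is symmetric in a and b, and approximates both s^2 (a . D b) and
  s^2 (b . D a).\<close>

lemma derivative_of_gradient_symmetric:
  fixes f :: "fvec \<Rightarrow> real"
  assumes grad: "\<And>y. y \<in> Rd d \<Longrightarrow> has_grad d f (g y) y"
    and D: "(g has_derivative D) (at p within Rd d)" and p: "p \<in> Rd d"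
    and a: "a \<in> Rd d" and b: "b \<in> Rd d"
  shows "a \<bullet> D b = b \<bullet> D a"
proof (rule ccontr)
  assume ne: "a \<bullet> D b \<noteq> b \<bullet> D a"
  define C1 where "C1 = norm a * (2 * norm a + norm b)"
  define C2 where "C2 = norm b * (2 * norm b + norm a)"
  have C1: "0 \<le> C1" "0 \<le> C2" unfolding C1_def C2_def by auto
  define e where "e = \<bar>a \<bullet> D b - b \<bullet> D a\<bar> / (2 * (C1 + C2 + 1))"
  have e: "0 < e" unfolding e_def using ne C1 by (intro divide_pos_pos) auto
  obtain \<delta>1 where d1: "\<delta>1 > 0" "\<And>s. 0 < s \<and> s < \<delta>1 \<Longrightarrow>
    \<bar>(f (p + s *\<^sub>R a + s *\<^sub>R b) - f (p + s *\<^sub>R a) - f (p + s *\<^sub>R b) + f p) - s\<^sup>2 * (a \<bullet> D b)\<bar>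
      \<le> e * s\<^sup>2 * C1"
    using mixed_second_difference_approx[OF grad D p a b e] unfolding C1_def by blast
  obtain \<delta>2 where d2: "\<delta>2 > 0" "\<And>s. 0 < s \<and> s < \<delta>2 \<Longrightarrow>
    \<bar>(f (p + s *\<^sub>R b + s *\<^sub>R a) - f (p + s *\<^sub>R b) - f (p + s *\<^sub>R a) + f p) - s\<^sup>2 * (b \<bullet> D a)\<bar>
      \<le> e * s\<^sup>2 * C2"
    using mixed_second_difference_approx[OF grad D p b a e] unfolding C2_def by blast
  define s where "s = min \<delta>1 \<delta>2 / 2"
  have s: "0 < s" "s < \<delta>1" "s < \<delta>2" unfolding s_def using d1 d2 by auto
  define X where "X = f (p + s *\<^sub>R a + s *\<^sub>R b) - f (p + s *\<^sub>R a) - f (p + s *\<^sub>R b) + f p"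
  have X2: "f (p + s *\<^sub>R b + s *\<^sub>R a) - f (p + s *\<^sub>R b) - f (p + s *\<^sub>R a) + f p = X"
    unfolding X_def by (simp add: ac_simps)
  have h1: "\<bar>X - s\<^sup>2 * (a \<bullet> D b)\<bar> \<le> e * s\<^sup>2 * C1" using d1(2)[of s] s unfolding X_def by auto
  have h2: "\<bar>X - s\<^sup>2 * (b \<bullet> D a)\<bar> \<le> e * s\<^sup>2 * C2" using d2(2)[of s] s X2 by auto
  have "s\<^sup>2 * \<bar>a \<bullet> D b - b \<bullet> D a\<bar> = \<bar>(X - s\<^sup>2 * (b \<bullet> D a)) - (X - s\<^sup>2 * (a \<bullet> D b))\<bar>"
  proof -
    have "(X - s\<^sup>2 * (b \<bullet> D a)) - (X - s\<^sup>2 * (a \<bullet> D b)) = s\<^sup>2 * (a \<bullet> D b - b \<bullet> D a)"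
      by (simp add: algebra_simps)
    then show ?thesis by (simp add: abs_mult)
  qed
  also have "\<dots> \<le> e * s\<^sup>2 * C1 + e * s\<^sup>2 * C2" using h1 h2 by linarith
  also have "\<dots> = s\<^sup>2 * (e * (C1 + C2))" by (simp add: algebra_simps)
  finally have "\<bar>a \<bullet> D b - b \<bullet> D a\<bar> \<le> e * (C1 + C2)" using s by simp
  also have "\<dots> < \<bar>a \<bullet> D b - b \<bullet> D a\<bar>"
  proof -
    have "e * (C1 + C2) = \<bar>a \<bullet> D b - b \<bullet> D a\<bar> * ((C1 + C2) / (2 * (C1 + C2 + 1)))"
      unfolding e_def by simp
    also have "\<dots> < \<bar>a \<bullet> D b - b \<bullet> D a\<bar> * 1"
      using ne C1 by (intro mult_strict_left_mono) (auto simp: field_simps)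
    finally show ?thesis by simp
  qed
  finally show False by simp
qed

lemma norm_derivative_le_Lipschitz:
  assumes D: "(g has_derivative D) (at p within Rd d)" and p: "p \<in> Rd d"
    and lip: "\<And>y. y \<in> Rd d \<Longrightarrow> norm (g y - g p) \<le> L * norm (y - p)"
    and v: "v \<in> Rd d"
  shows "norm (D v) \<le> L * norm v"
proof (rule field_le_epsilon)
  fix e :: real assume e: "0 < e"
  have lin: "linear D" using D by (rule has_derivative_linear)
  show "norm (D v) \<le> L * norm v + e"
  proof (cases "v = 0")
    case True then show ?thesis using lin e by (simp add: linear_0)
  next
    case False
    then have nv: "0 < norm v" by simp
    define e' where "e' = e / norm v"
    have e': "0 < e'" unfolding e'_def using e nv by simp
    obtain \<delta> where dl: "\<delta> > 0"
      and db: "\<And>y. y \<in> Rd d \<Longrightarrow> norm (y - p) < \<delta> \<Longrightarrow> norm (g y - g p - D (y - p)) \<le> e' * norm (y - p)"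
      using D e' unfolding has_derivative_within_alt by blast
    define t where "t = \<delta> / (2 * norm v)"
    have t: "0 < t" unfolding t_def using dl nv by simp
    have ty: "norm ((p + t *\<^sub>R v) - p) < \<delta>" using t nv dl by (simp add: t_def)
    have yd: "p + t *\<^sub>R v \<in> Rd d" using p v by auto
    have "t * norm (D v) = norm (D ((p + t *\<^sub>R v) - p))" using t lin by (simp add: linear_scale)
    also have "\<dots> \<le> norm (g (p + t *\<^sub>R v) - g p) + norm (g (p + t *\<^sub>R v) - g p - D ((p + t *\<^sub>R v) - p))"
      by (rule order_trans[OF _ norm_triangle_ineq4[of "g (p + t *\<^sub>R v) - g p" "g (p + t *\<^sub>R v) - g p - D ((p + t *\<^sub>R v) - p)"]]) simp
    also have "\<dots> \<le> L * norm (t *\<^sub>R v) + e' * norm (t *\<^sub>R v)"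
      using lip[OF yd] db[OF yd ty] by (intro add_mono) auto
    also have "\<dots> = t * (L * norm v + e)" using t nv by (simp add: e'_def algebra_simps)
    finally show ?thesis using t by simp
  qed
qed

lemma inner_derivative_ge_neg_Lipschitz:
  assumes "(g has_derivative D) (at p within Rd d)" "p \<in> Rd d"
    "\<And>y. y \<in> Rd d \<Longrightarrow> norm (g y - g p) \<le> L * norm (y - p)" "v \<in> Rd d"
  shows "- (L * (norm v)\<^sup>2) \<le> v \<bullet> D v"
proof -
  have "\<bar>v \<bullet> D v\<bar> \<le> norm v * norm (D v)" by (rule Cauchy_Schwarz_ineq2)
  also have "\<dots> \<le> norm v * (L * norm v)" by (intro mult_left_mono norm_derivative_le_Lipschitz[OF assms]) auto
  finally show ?thesis by (simp add: power2_eq_square mult_ac)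
qed

section \<open>Positive semidefinite operators\<close>

lemma psd_opD:
  assumes "psd_op d H"
  shows "linear H" "\<And>v. v \<in> Rd d \<Longrightarrow> H v \<in> Rd d"
    "\<And>a b. a \<in> Rd d \<Longrightarrow> b \<in> Rd d \<Longrightarrow> a \<bullet> H b = H a \<bullet> b"
    "\<And>z. z \<in> Rd d \<Longrightarrow> 0 \<le> z \<bullet> H z"
  using assms by (auto simp: psd_op_def sym_op_def)

lemma psd_op_Cauchy_Schwarz:
  assumes H: "psd_op d H" and a: "a \<in> Rd d" and b: "b \<in> Rd d"
  shows "(a \<bullet> H b)\<^sup>2 \<le> (a \<bullet> H a) * (b \<bullet> H b)"
proof -
  note Hf = psd_opD[OF H]
  define \<alpha> where "\<alpha> = a \<bullet> H a" define \<beta> where "\<beta> = b \<bullet> H b" define \<gamma> where "\<gamma> = a \<bullet> H b"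
  have ba: "b \<bullet> H a = \<gamma>" unfolding \<gamma>_def using Hf(3)[OF a b] by (simp add: inner_commute)
  have q: "0 \<le> \<alpha> + 2 * t * \<gamma> + t\<^sup>2 * \<beta>" for t
  proof -
    have "0 \<le> (a + t *\<^sub>R b) \<bullet> H (a + t *\<^sub>R b)" using a b by (intro Hf(4)) auto
    also have "\<dots> = \<alpha> + 2 * t * \<gamma> + t\<^sup>2 * \<beta>"
      using Hf(1) ba unfolding \<alpha>_def \<beta>_def \<gamma>_def
      by (simp add: linear_add linear_scale inner_add_left inner_add_right power2_eq_square algebra_simps)
    finally show ?thesis .
  qed
  have b0: "0 \<le> \<beta>" unfolding \<beta>_def using Hf(4)[OF b] .
  show ?thesis
  proof (cases "\<beta> = 0")
    case True
    have "\<gamma> = 0"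
    proof (rule ccontr)
      assume g: "\<gamma> \<noteq> 0"
      have "0 \<le> \<alpha> + 2 * (- (\<alpha> + 1) / (2 * \<gamma>)) * \<gamma>" using q[of "- (\<alpha> + 1) / (2 * \<gamma>)"] True by simp
      also have "\<dots> = -1" using g by (simp add: field_simps)
      finally show False by simp
    qed
    then show ?thesis using True unfolding \<alpha>_def \<beta>_def \<gamma>_def[symmetric] by simp
  next
    case False
    then have bp: "0 < \<beta>" using b0 by simp
    have "0 \<le> \<alpha> + 2 * (- \<gamma> / \<beta>) * \<gamma> + (- \<gamma> / \<beta>)\<^sup>2 * \<beta>" by (rule q)
    also have "\<dots> = \<alpha> - \<gamma>\<^sup>2 / \<beta>" using bp by (simp add: field_simps power2_eq_square)
    finally have "\<gamma>\<^sup>2 / \<beta> \<le> \<alpha>" by simp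
    then have "\<gamma>\<^sup>2 \<le> \<alpha> * \<beta>" using bp by (simp add: divide_le_eq)
    then show ?thesis unfolding \<alpha>_def \<beta>_def \<gamma>_def by simp
  qed
qed

lemma abs_inner_psd_op_le:
  assumes H: "psd_op d H" and a: "a \<in> Rd d" and b: "b \<in> Rd d"
  shows "\<bar>a \<bullet> H b\<bar> \<le> sqrt (a \<bullet> H a) * sqrt (b \<bullet> H b)"
proof -
  have "sqrt ((a \<bullet> H b)\<^sup>2) \<le> sqrt ((a \<bullet> H a) * (b \<bullet> H b))"
    using psd_op_Cauchy_Schwarz[OF assms] by (rule real_sqrt_le_mono)
  then show ?thesis using psd_opD(4)[OF H a] psd_opD(4)[OF H b] by (simp add: real_sqrt_mult)
qed

lemma quadratic_form_le_trace:
  assumes H: "psd_op d H" and z: "z \<in> Rd d"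
  shows "z \<bullet> H z \<le> (norm z)\<^sup>2 * trace_op d H"
proof -
  note Hf = psd_opD[OF H]
  define s where "s = (\<lambda>i. sqrt (std_basis i \<bullet> H (std_basis i)))"
  define c where "c = (\<lambda>i. \<bar>vx z i\<bar>)"
  have hij: "vx z i * vx z j * (std_basis i \<bullet> H (std_basis j)) \<le> (c i * s i) * (c j * s j)"
    if "i < d" "j < d" for i j
  proof -
    have "vx z i * vx z j * (std_basis i \<bullet> H (std_basis j)) \<le> \<bar>vx z i * vx z j * (std_basis i \<bullet> H (std_basis j))\<bar>"
      by simp
    also have "\<dots> = c i * c j * \<bar>std_basis i \<bullet> H (std_basis j)\<bar>" by (simp add: c_def abs_mult)
    also have "\<dots> \<le> c i * c j * (s i * s j)"
      unfolding s_def using that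
      by (intro mult_left_mono abs_inner_psd_op_le[OF H]) (auto simp: c_def std_basis_in_Rd)
    finally show ?thesis by (simp add: mult_ac)
  qed
  have "z \<bullet> H z = (\<Sum>i<d. \<Sum>j<d. vx z i * vx z j * (std_basis i \<bullet> H (std_basis j)))"
    using quadratic_form_vec_of[OF Hf(1), of d "vx z"] by (simp add: vec_of_vx[OF z])
  also have "\<dots> \<le> (\<Sum>i<d. \<Sum>j<d. (c i * s i) * (c j * s j))"
    by (intro sum_mono hij) auto
  also have "\<dots> = (\<Sum>i<d. c i * s i)\<^sup>2" by (simp add: power2_eq_square sum_product)
  also have "\<dots> \<le> (\<Sum>i<d. (c i)\<^sup>2) * (\<Sum>i<d. (s i)\<^sup>2)" by (rule Cauchy_Schwarz_ineq_sum)
  also have "(\<Sum>i<d. (c i)\<^sup>2) = (norm z)\<^sup>2" using power2_norm_Rd[OF z] by (simp add: c_def)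
  also have "(\<Sum>i<d. (s i)\<^sup>2) = trace_op d H"
    unfolding s_def trace_op_def using Hf(4) by (intro sum.cong refl) (auto simp: std_basis_in_Rd)
  finally show ?thesis .
qed

lemma norm_psd_op_le:
  assumes H: "psd_op d H" and K: "\<And>z. z \<in> Rd d \<Longrightarrow> z \<bullet> H z \<le> K * (norm z)\<^sup>2" and K0: "0 \<le> K"
    and v: "v \<in> Rd d"
  shows "norm (H v) \<le> K * norm v"
proof -
  note Hf = psd_opD[OF H]
  define w where "w = H v"
  have w: "w \<in> Rd d" unfolding w_def using Hf(2)[OF v] .
  have "(norm w)\<^sup>2 = v \<bullet> H w" using Hf(3)[OF v w] by (simp add: w_def power2_norm_eq_inner)
  also have "\<dots> \<le> sqrt (v \<bullet> H v) * sqrt (w \<bullet> H w)" using abs_inner_psd_op_le[OF H v w] by simp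
  also have "\<dots> \<le> sqrt (K * (norm v)\<^sup>2) * sqrt (K * (norm w)\<^sup>2)"
    using K[OF v] K[OF w] Hf(4)[OF v] Hf(4)[OF w] by (intro mult_mono) auto
  also have "\<dots> = K * norm v * norm w" using K0 by (simp add: real_sqrt_mult)
  finally have "norm w * norm w \<le> (K * norm v) * norm w" by (simp add: power2_eq_square mult_ac)
  then show ?thesis unfolding w_def[symmetric]
    by (cases "norm w = 0") (use K0 in \<open>auto simp: mult_le_cancel_right\<close>)
qed

lemma opnorm_le:
  assumes d: "1 \<le> d" and K: "\<And>v. v \<in> Rd d \<Longrightarrow> norm (H v) \<le> K * norm v"
  shows "opnorm d H \<le> K"
  unfolding opnorm_def
proof (rule cSup_least)
  show "{norm (H v) |v. v \<in> Rd d \<and> norm v = 1} \<noteq> {}"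
    using d norm_std_basis[of 0] std_basis_in_Rd[of 0 d] by auto
  show "x \<le> K" if "x \<in> {norm (H v) |v. v \<in> Rd d \<and> norm v = 1}" for x
    using that K by force
qed

lemma trace_op_nonneg: "psd_op d H \<Longrightarrow> 0 \<le> trace_op d H"
  unfolding trace_op_def using psd_opD(4) by (intro sum_nonneg) (auto simp: std_basis_in_Rd)

lemma psd_op_intdim_bounds:
  assumes H: "psd_op d H" and lw: "loewner_le d H (\<lambda>v. L *\<^sub>R v)" and op: "opnorm d H > 0"
    and idim: "intdim d H \<le> r" and d: "1 \<le> d" and L: "0 < L"
  shows "trace_op d H \<le> r * L" "1 \<le> r"
proof -
  have tr0: "0 \<le> trace_op d H" by (rule trace_op_nonneg[OF H])
  have qL: "z \<bullet> H z \<le> L * (norm z)\<^sup>2" if "z \<in> Rd d" for z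
    using lw that by (simp add: loewner_le_def power2_norm_eq_inner)
  have opL: "opnorm d H \<le> L"
    by (rule opnorm_le[OF d]) (rule norm_psd_op_le[OF H qL], auto simp: L less_imp_le)
  have opT: "opnorm d H \<le> trace_op d H"
  proof (rule opnorm_le[OF d])
    have qT: "z \<bullet> H z \<le> trace_op d H * (norm z)\<^sup>2" if "z \<in> Rd d" for z
      using quadratic_form_le_trace[OF H that] by (simp add: mult.commute)
    fix v assume "v \<in> Rd d"
    then show "norm (H v) \<le> trace_op d H * norm v" using norm_psd_op_le[OF H qT tr0] by blast
  qed
  have tr: "trace_op d H \<le> r * opnorm d H" using idim op by (simp add: intdim_def divide_le_eq)
  show "1 \<le> r"
  proof -
    have "opnorm d H \<le> r * opnorm d H" using opT tr by linarith
    then show ?thesis using op by simp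
  qed
  then show "trace_op d H \<le> r * L" using tr opL by (smt (verit) mult_left_mono)
qed

lemma le_sqrt_mult_of_scaled_bounds:
  fixes X a b :: real
  assumes "\<And>t. 0 < t \<Longrightarrow> X \<le> (t\<^sup>2 * a + b / t\<^sup>2) / 2" and "0 < a" "0 < b"
  shows "X \<le> sqrt a * sqrt b"
proof -
  define t where "t = sqrt (sqrt b / sqrt a)"
  have t: "0 < t" "t\<^sup>2 = sqrt b / sqrt a" unfolding t_def using assms(2,3) by auto
  have "t\<^sup>2 * a = sqrt a * sqrt b" "b / t\<^sup>2 = sqrt a * sqrt b"
    unfolding t(2) using assms(2,3) real_sqrt_pow2[of a] real_sqrt_pow2[of b]
    by (simp_all add: field_simps power2_eq_square)
  then show ?thesis using assms(1)[OF t(1)] by simp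
qed

lemma symmetric_form_polarization_bound:
  fixes B H :: "fvec \<Rightarrow> fvec"
  assumes B: "linear B" and Bs: "\<And>a b. a \<in> Rd d \<Longrightarrow> b \<in> Rd d \<Longrightarrow> a \<bullet> B b = b \<bullet> B a"
    and H: "psd_op d H" and L: "0 < L"
    and BQ: "\<And>z. z \<in> Rd d \<Longrightarrow> \<bar>z \<bullet> B z\<bar> \<le> L * (norm z)\<^sup>2 + z \<bullet> H z"
    and e: "e \<in> Rd d" and x: "x \<in> Rd d"
  shows "\<bar>e \<bullet> B x\<bar> \<le> sqrt (L * (norm e)\<^sup>2 + e \<bullet> H e) * sqrt (L * (norm x)\<^sup>2 + x \<bullet> H x)"
proof -
  define Q where "Q = (\<lambda>z. L * (norm z)\<^sup>2 + z \<bullet> H z)"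
  have Hl: "linear H" and Hs: "\<And>a b. a \<in> Rd d \<Longrightarrow> b \<in> Rd d \<Longrightarrow> a \<bullet> H b = H a \<bullet> b"
    and Hp: "\<And>z. z \<in> Rd d \<Longrightarrow> 0 \<le> z \<bullet> H z"
    using H by (auto simp: psd_op_def sym_op_def)
  have par: "Q (a + b) + Q (a - b) = 2 * Q a + 2 * Q b" if "a \<in> Rd d" "b \<in> Rd d" for a b
  proof -
    have "a \<bullet> H b = b \<bullet> H a" using Hs[OF that] by (simp add: inner_commute)
    then show ?thesis unfolding Q_def using Hl
      by (simp add: linear_add linear_diff inner_add_left inner_add_right inner_diff_left inner_diff_right
          power2_norm_eq_inner algebra_simps)
  qed
  have key: "\<bar>e \<bullet> B x\<bar> \<le> (t\<^sup>2 * Q e + Q x / t\<^sup>2) / 2" if t: "0 < t" for t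
  proof -
    define a where "a = t *\<^sub>R e" define b where "b = (1/t) *\<^sub>R x"
    have ab: "a \<in> Rd d" "b \<in> Rd d" unfolding a_def b_def using e x by auto
    have sy: "a \<bullet> B b = b \<bullet> B a" using Bs[OF ab] .
    have "4 * (a \<bullet> B b) = (a + b) \<bullet> B (a + b) - (a - b) \<bullet> B (a - b)"
      using B sy by (simp add: linear_add linear_diff inner_add_left inner_add_right inner_diff_left
          inner_diff_right algebra_simps)
    then have "4 * \<bar>a \<bullet> B b\<bar> \<le> \<bar>(a + b) \<bullet> B (a + b)\<bar> + \<bar>(a - b) \<bullet> B (a - b)\<bar>" by linarith
    also have "\<dots> \<le> Q (a + b) + Q (a - b)" unfolding Q_def using ab by (intro add_mono BQ) auto
    also have "\<dots> = 2 * Q a + 2 * Q b" using par[OF ab] .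
    finally have "2 * \<bar>a \<bullet> B b\<bar> \<le> Q a + Q b" by linarith
    moreover have "a \<bullet> B b = e \<bullet> B x" unfolding a_def b_def using B t by (simp add: linear_scale)
    moreover have "Q a = t\<^sup>2 * Q e" "Q b = Q x / t\<^sup>2" unfolding a_def b_def Q_def using Hl t
      by (simp_all add: linear_scale power2_eq_square field_simps)
    ultimately show ?thesis by simp
  qed
  show ?thesis
  proof (cases "e = 0 \<or> x = 0")
    case True then show ?thesis using B by (auto simp: linear_0)
  next
    case False
    have Qe: "0 < Q e" unfolding Q_def using False L Hp[OF e] by (intro add_pos_nonneg) auto
    have Qx: "0 < Q x" unfolding Q_def using False L Hp[OF x] by (intro add_pos_nonneg) auto
    show ?thesis using le_sqrt_mult_of_scaled_bounds[OF key Qe Qx] unfolding Q_def .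
  qed
qed

section \<open>Gaussian smoothing\<close>

lemma has_grad_average:
  assumes "\<And>i. i < N \<Longrightarrow> has_grad d (f i) (g i) y"
  shows "has_grad d (\<lambda>\<theta>. (\<Sum>i<N. f i \<theta>) / real N) ((\<Sum>i<N. g i) /\<^sub>R real N) y"
proof -
  have "(\<Sum>i<N. g i) \<in> Rd d" using assms by (intro Rd_sum) (auto simp: has_grad_def)
  moreover have "((\<lambda>\<theta>. \<Sum>i<N. f i \<theta>) has_derivative (\<lambda>h. \<Sum>i<N. g i \<bullet> h)) (at y within Rd d)"
    using assms by (intro has_derivative_sum) (auto simp: has_grad_def)
  from bounded_linear.has_derivative[OF bounded_linear_divide[of "real N"] this]
  have "((\<lambda>\<theta>. (\<Sum>i<N. f i \<theta>) / real N) has_derivative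
      (\<lambda>h. ((\<Sum>i<N. g i) /\<^sub>R real N) \<bullet> h)) (at y within Rd d)"
    by (simp add: inner_sum_left divide_inverse mult.commute)
  ultimately show ?thesis by (simp add: has_grad_def Rd_scaleR)
qed

lemma lipschitz_on_average_gradient:
  assumes "0 < N" "0 \<le> L" and smooth: "\<forall>i<N. smooth_with d L (f i) (g i)"
    and grad: "\<forall>\<theta>\<in>Rd d. has_grad d (\<lambda>\<theta>. (\<Sum>i<N. f i \<theta>) / real N) (G \<theta>) \<theta>"
  shows "L-lipschitz_on (Rd d) G"
proof (rule lipschitz_onI)
  have G_eq: "G y = (\<Sum>i<N. g i y) /\<^sub>R real N" if "y \<in> Rd d" for y
    using smooth that
    by (intro has_grad_unique[OF grad[rule_format, OF that] has_grad_average])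
       (auto simp: smooth_with_def)
  fix y z assume y: "y \<in> Rd d" and z: "z \<in> Rd d"
  have "dist (G y) (G z) = norm (\<Sum>i<N. g i y - g i z) / real N"
    using G_eq[OF y] G_eq[OF z] \<open>0 < N\<close>
    by (simp add: dist_norm sum_subtractf scaleR_diff_right[symmetric] divide_inverse mult.commute)
  also have "\<dots> \<le> (\<Sum>i<N. L * norm (y - z)) / real N"
    using smooth y z
    by (intro divide_right_mono order_trans[OF norm_sum sum_mono]) (auto simp: smooth_with_def)
  also have "\<dots> = L * dist y z" using \<open>0 < N\<close> by (simp add: dist_norm)
  finally show "dist (G y) (G z) \<le> L * dist y z" .
qed (fact \<open>0 \<le> L\<close>)

text \<open>The Gaussian average E [g (theta + mu u)], taken coordinate by coordinate: fvec is not
  complete, so it carries no Bochner integral.\<close>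

definition smoothed_field :: "nat \<Rightarrow> real \<Rightarrow> (fvec \<Rightarrow> fvec) \<Rightarrow> fvec \<Rightarrow> fvec" where
  "smoothed_field d \<mu> g \<theta> = vec_of d (\<lambda>i. \<integral>u. vx (g (\<theta> + \<mu> *\<^sub>R vec_of d u)) i \<partial>gauss d)"

lemma smoothed_field_in_Rd [simp]: "smoothed_field d \<mu> g \<theta> \<in> Rd d"
  by (simp add: smoothed_field_def)

lemma integrable_smoothed_inner:
  fixes g :: "fvec \<Rightarrow> fvec"
  assumes lip: "L-lipschitz_on (Rd d) g" and \<theta>: "\<theta> \<in> Rd d"
  shows "integrable (gauss d) (\<lambda>u. g (\<theta> + \<mu> *\<^sub>R vec_of d u) \<bullet> c)"
proof (rule integrable_gauss_norm_bound)
  have "continuous_on (Rd d) (\<lambda>y. g (\<theta> + \<mu> *\<^sub>R y) \<bullet> c)"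
    by (intro continuous_on_inner continuous_on_const continuous_on_shift_Rd \<theta>
        lipschitz_on_continuous_on[OF lip])
  then show "(\<lambda>u. g (\<theta> + \<mu> *\<^sub>R vec_of d u) \<bullet> c) \<in> borel_measurable (gauss d)"
    by (rule borel_measurable_vec_of)
  fix u
  have "\<bar>g (\<theta> + \<mu> *\<^sub>R vec_of d u) \<bullet> c\<bar> \<le> norm (g (\<theta> + \<mu> *\<^sub>R vec_of d u)) * norm c"
    by (rule Cauchy_Schwarz_ineq2)
  also have "norm (g (\<theta> + \<mu> *\<^sub>R vec_of d u)) \<le> norm (g \<theta>) + L * (\<bar>\<mu>\<bar> * norm (vec_of d u))"
    using lipschitz_on_Rd_normD[OF lip, of "\<theta> + \<mu> *\<^sub>R vec_of d u" \<theta>] \<theta>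
      norm_triangle_ineq2[of "g (\<theta> + \<mu> *\<^sub>R vec_of d u)" "g \<theta>"] by simp
  finally show "\<bar>g (\<theta> + \<mu> *\<^sub>R vec_of d u) \<bullet> c\<bar> \<le> norm (g \<theta>) * norm c
      + (L * \<bar>\<mu>\<bar> * norm c) * norm (vec_of d u) + 0 * (norm (vec_of d u))\<^sup>2"
    by (simp add: algebra_simps mult_right_mono)
qed

lemma integrable_smoothed:
  fixes F :: "fvec \<Rightarrow> real"
  assumes grad: "\<And>y. y \<in> Rd d \<Longrightarrow> has_grad d F (g y) y"
    and lip: "L-lipschitz_on (Rd d) g" and y: "y \<in> Rd d"
  shows "integrable (gauss d) (\<lambda>u. F (y + \<mu> *\<^sub>R vec_of d u))"
proof (rule integrable_gauss_norm_bound)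
  show "(\<lambda>u. F (y + \<mu> *\<^sub>R vec_of d u)) \<in> borel_measurable (gauss d)"
    by (intro borel_measurable_vec_of continuous_on_shift_Rd y continuous_on_has_grad[of d F g] grad)
  fix u
  have "\<bar>F (y + \<mu> *\<^sub>R vec_of d u) - F y - g y \<bullet> (\<mu> *\<^sub>R vec_of d u)\<bar>
      \<le> L * (norm (\<mu> *\<^sub>R vec_of d u))\<^sup>2"
    by (rule lipschitz_gradient_taylor[OF grad lip y]) auto
  moreover have "\<bar>g y \<bullet> (\<mu> *\<^sub>R vec_of d u)\<bar> \<le> norm (g y) * (\<bar>\<mu>\<bar> * norm (vec_of d u))"
    using Cauchy_Schwarz_ineq2[of "g y" "\<mu> *\<^sub>R vec_of d u"] by simp
  ultimately show "\<bar>F (y + \<mu> *\<^sub>R vec_of d u)\<bar> \<le> \<bar>F y\<bar>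
      + (norm (g y) * \<bar>\<mu>\<bar>) * norm (vec_of d u) + (L * \<mu>\<^sup>2) * (norm (vec_of d u))\<^sup>2"
    by (simp add: power_mult_distrib mult_ac)
qed

lemma inner_smoothed_field:
  assumes lip: "L-lipschitz_on (Rd d) g" and \<theta>: "\<theta> \<in> Rd d" and c: "c \<in> Rd d"
  shows "smoothed_field d \<mu> g \<theta> \<bullet> c = (\<integral>u. g (\<theta> + \<mu> *\<^sub>R vec_of d u) \<bullet> c \<partial>gauss d)"
proof -
  have int: "integrable (gauss d) (\<lambda>u. vx (g (\<theta> + \<mu> *\<^sub>R vec_of d u)) i)" for i
    using integrable_smoothed_inner[OF lip \<theta>, of \<mu> "std_basis i"]
    by (simp add: inner_std_basis_right)
  have "smoothed_field d \<mu> g \<theta> \<bullet> c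
      = (\<Sum>i<d. (\<integral>u. vx (g (\<theta> + \<mu> *\<^sub>R vec_of d u)) i \<partial>gauss d) * vx c i)"
    unfolding smoothed_field_def by (subst inner_Rd_eq_sum[of _ d]) (auto simp: vx_vec_of)
  also have "\<dots> = (\<integral>u. (\<Sum>i<d. vx (g (\<theta> + \<mu> *\<^sub>R vec_of d u)) i * vx c i) \<partial>gauss d)"
    by (subst Bochner_Integration.integral_sum) (auto intro: int Bochner_Integration.integrable_mult_left)
  also have "\<dots> = (\<integral>u. g (\<theta> + \<mu> *\<^sub>R vec_of d u) \<bullet> c \<partial>gauss d)"
    by (simp add: inner_Rd_eq_sum[OF disjI2[OF c]])
  finally show ?thesis .
qed

lemma smoothed_taylor:
  fixes F :: "fvec \<Rightarrow> real"
  assumes grad: "\<And>y. y \<in> Rd d \<Longrightarrow> has_grad d F (g y) y"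
    and lip: "L-lipschitz_on (Rd d) g" and \<theta>: "\<theta> \<in> Rd d" and h: "h \<in> Rd d"
  shows "\<bar>smoothed d \<mu> F (\<theta> + h) - smoothed d \<mu> F \<theta> - smoothed_field d \<mu> g \<theta> \<bullet> h\<bar>
    \<le> L * (norm h)\<^sup>2"
proof -
  interpret prob_space "gauss d" by (rule prob_space_gauss)
  define R where "R = (\<lambda>u. F ((\<theta> + \<mu> *\<^sub>R vec_of d u) + h) - F (\<theta> + \<mu> *\<^sub>R vec_of d u)
    - g (\<theta> + \<mu> *\<^sub>R vec_of d u) \<bullet> h)"
  have shift: "(\<theta> + h) + \<mu> *\<^sub>R vec_of d u = (\<theta> + \<mu> *\<^sub>R vec_of d u) + h" for u
    by (simp add: ac_simps)
  have i1: "integrable (gauss d) (\<lambda>u. F ((\<theta> + \<mu> *\<^sub>R vec_of d u) + h))"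
    using integrable_smoothed[OF grad lip, of "\<theta> + h" \<mu>] \<theta> h by (auto simp: shift)
  have i2: "integrable (gauss d) (\<lambda>u. F (\<theta> + \<mu> *\<^sub>R vec_of d u))"
    by (rule integrable_smoothed[OF grad lip \<theta>])
  have i3: "integrable (gauss d) (\<lambda>u. g (\<theta> + \<mu> *\<^sub>R vec_of d u) \<bullet> h)"
    by (rule integrable_smoothed_inner[OF lip \<theta>])
  have "smoothed d \<mu> F (\<theta> + h) - smoothed d \<mu> F \<theta> - smoothed_field d \<mu> g \<theta> \<bullet> h = (\<integral>u. R u \<partial>gauss d)"
    unfolding R_def smoothed_def inner_smoothed_field[OF lip \<theta> h] shift
    by (simp add: Bochner_Integration.integral_diff Bochner_Integration.integrable_diff i1 i2 i3)
  also have "\<bar>\<dots>\<bar> \<le> (\<integral>u. \<bar>R u\<bar> \<partial>gauss d)" by (rule integral_abs_bound)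
  also have "\<dots> \<le> (\<integral>u. L * (norm h)\<^sup>2 \<partial>gauss d)"
    unfolding R_def using \<theta> h
    by (intro integral_mono integrable_abs Bochner_Integration.integrable_diff i1 i2 i3
        integrable_const_gauss lipschitz_gradient_taylor[OF grad lip]) auto
  finally show ?thesis by (simp add: prob_space)
qed

lemma has_grad_smoothed:
  fixes F :: "fvec \<Rightarrow> real"
  assumes grad: "\<And>y. y \<in> Rd d \<Longrightarrow> has_grad d F (g y) y"
    and lip: "L-lipschitz_on (Rd d) g" and "0 < L" and \<theta>: "\<theta> \<in> Rd d"
  shows "has_grad d (smoothed d \<mu> F) (smoothed_field d \<mu> g \<theta>) \<theta>"
  unfolding has_grad_def
  using has_derivative_of_quadratic_remainder[OF \<open>0 < L\<close> smoothed_taylor[OF grad lip \<theta>] \<theta>]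
  by (simp add: smoothed_field_def)

text \<open>D1 - D2 is symmetric, and its quadratic form lies between -(L + H) and L + H because
  each derivative of the L-Lipschitz gradient lies between -L and H.\<close>

lemma derivative_difference_bound:
  fixes f :: "fvec \<Rightarrow> real" and g :: "fvec \<Rightarrow> fvec"
  assumes grad: "\<And>y. y \<in> Rd d \<Longrightarrow> has_grad d f (g y) y"
    and lip: "L-lipschitz_on (Rd d) g" and L: "0 < L" and H: "psd_op d H"
    and D1: "(g has_derivative D1) (at p1 within Rd d)" "loewner_le d D1 H" and p1: "p1 \<in> Rd d"
    and D2: "(g has_derivative D2) (at p2 within Rd d)" "loewner_le d D2 H" and p2: "p2 \<in> Rd d"
    and e: "e \<in> Rd d" and x: "x \<in> Rd d"
  shows "\<bar>e \<bullet> (D1 x - D2 x)\<bar> \<le> sqrt (L * (norm e)\<^sup>2 + e \<bullet> H e) * sqrt (L * (norm x)\<^sup>2 + x \<bullet> H x)"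
proof -
  define B where "B = (\<lambda>z. D1 z - D2 z)"
  have "linear B" unfolding B_def
    by (intro linear_compose_sub has_derivative_linear[OF D1(1)] has_derivative_linear[OF D2(1)])
  moreover have "a \<bullet> B b = b \<bullet> B a" if "a \<in> Rd d" "b \<in> Rd d" for a b
    using derivative_of_gradient_symmetric[OF grad D1(1) p1 that]
      derivative_of_gradient_symmetric[OF grad D2(1) p2 that]
    unfolding B_def by (simp add: inner_diff_right)
  moreover have "\<bar>z \<bullet> B z\<bar> \<le> L * (norm z)\<^sup>2 + z \<bullet> H z" if z: "z \<in> Rd d" for z
  proof -
    have "z \<bullet> D1 z \<le> z \<bullet> H z" "z \<bullet> D2 z \<le> z \<bullet> H z"
      using D1(2) D2(2) z by (auto simp: loewner_le_def)
    moreover have "- (L * (norm z)\<^sup>2) \<le> z \<bullet> D1 z" "- (L * (norm z)\<^sup>2) \<le> z \<bullet> D2 z"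
      using inner_derivative_ge_neg_Lipschitz[OF D1(1) p1 lipschitz_on_Rd_normD[OF lip _ p1] z]
        inner_derivative_ge_neg_Lipschitz[OF D2(1) p2 lipschitz_on_Rd_normD[OF lip _ p2] z]
      by auto
    ultimately show ?thesis unfolding B_def by (simp add: inner_diff_right abs_le_iff)
  qed
  ultimately show ?thesis
    using symmetric_form_polarization_bound[OF _ _ H L _ e x, of B] unfolding B_def by blast
qed

lemma gradient_second_difference_bound:
  fixes f :: "fvec \<Rightarrow> real" and g :: "fvec \<Rightarrow> fvec"
  assumes grad: "\<And>y. y \<in> Rd d \<Longrightarrow> has_grad d f (g y) y"
    and lip: "L-lipschitz_on (Rd d) g" and L: "0 < L"
    and H: "psd_op d H" and HL: "loewner_le d H (\<lambda>v. L *\<^sub>R v)"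
    and local: "\<And>p. p \<in> Rd d \<Longrightarrow> norm (p - \<theta>) \<le> R \<Longrightarrow>
        \<exists>D. (g has_derivative D) (at p within Rd d) \<and> loewner_le d D H"
    and \<theta>: "\<theta> \<in> Rd d" and e: "e \<in> Rd d" "norm e = 1" and x: "x \<in> Rd d" "norm x \<le> R"
  shows "\<bar>e \<bullet> (g (\<theta> + x) + g (\<theta> - x) - 2 *\<^sub>R g \<theta>)\<bar> \<le> sqrt (2 * L) * sqrt (L * (norm x)\<^sup>2 + x \<bullet> H x)"
proof -
  obtain DD where DD: "\<And>p. p \<in> Rd d \<Longrightarrow> norm (p - \<theta>) \<le> R \<Longrightarrow>
      (g has_derivative DD p) (at p within Rd d) \<and> loewner_le d (DD p) H"
    using local by metis
  define k where "k = (\<lambda>t. e \<bullet> g (\<theta> + t *\<^sub>R x) + e \<bullet> g (\<theta> + t *\<^sub>R (- x)))"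
  define p1 where "p1 = (\<lambda>t. \<theta> + t *\<^sub>R x)"
  define p2 where "p2 = (\<lambda>t. \<theta> + t *\<^sub>R (- x))"
  have p12: "p1 t \<in> Rd d" "norm (p1 t - \<theta>) \<le> R" "p2 t \<in> Rd d" "norm (p2 t - \<theta>) \<le> R"
    if "0 \<le> t" "t \<le> 1" for t
    using that \<theta> x mult_right_mono[of t 1 "norm x"] unfolding p1_def p2_def by auto
  have der: "DERIV k t :> e \<bullet> DD (p1 t) x - e \<bullet> DD (p2 t) x" if t: "0 \<le> t" "t \<le> 1" for t
  proof -
    have D1: "(g has_derivative DD (p1 t)) (at (\<theta> + t *\<^sub>R x) within Rd d)"
      and D2: "(g has_derivative DD (p2 t)) (at (\<theta> + t *\<^sub>R (- x)) within Rd d)"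
      using DD[OF p12(1,2)[OF t]] DD[OF p12(3,4)[OF t]] by (simp_all add: p1_def p2_def)
    have "DERIV k t :> e \<bullet> DD (p1 t) x + e \<bullet> DD (p2 t) (- x)"
      unfolding k_def using \<theta> x(1)
      by (intro DERIV_add has_real_derivative_along_line[OF has_derivative_inner_right[OF D1]]
          has_real_derivative_along_line[OF has_derivative_inner_right[OF D2]] Rd_minus)
    then show ?thesis using linear_neg[OF has_derivative_linear[OF D2]] by simp
  qed
  obtain \<xi> where \<xi>: "0 < \<xi>" "\<xi> < 1"
    and mvt: "k 1 - k 0 = (1 - 0) * (e \<bullet> DD (p1 \<xi>) x - e \<bullet> DD (p2 \<xi>) x)"
    using MVT2[of 0 1 k, OF _ der] by auto
  have "\<bar>e \<bullet> (DD (p1 \<xi>) x - DD (p2 \<xi>) x)\<bar>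
      \<le> sqrt (L * (norm e)\<^sup>2 + e \<bullet> H e) * sqrt (L * (norm x)\<^sup>2 + x \<bullet> H x)"
  proof -
    have "0 \<le> \<xi>" "\<xi> \<le> 1" using \<xi> by auto
    note p = p12[OF this]
    show ?thesis using DD[OF p(1,2)] DD[OF p(3,4)]
      by (elim conjE) (rule derivative_difference_bound[OF grad lip L H _ _ p(1) _ _ p(3) e(1) x(1)])
  qed
  also have "\<dots> \<le> sqrt (2 * L) * sqrt (L * (norm x)\<^sup>2 + x \<bullet> H x)"
  proof (rule mult_right_mono)
    have "e \<bullet> H e \<le> e \<bullet> (L *\<^sub>R e)" using HL e(1) unfolding loewner_le_def by blast
    also have "\<dots> = L" using e(2) by (simp add: power2_norm_eq_inner[symmetric])
    finally have "e \<bullet> H e \<le> L" .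
    then show "sqrt (L * (norm e)\<^sup>2 + e \<bullet> H e) \<le> sqrt (2 * L)" using e(2) by simp
    show "0 \<le> sqrt (L * (norm x)\<^sup>2 + x \<bullet> H x)"
      using L psd_opD(4)[OF H x(1)] by simp
  qed
  moreover have "k 1 - k 0 = e \<bullet> (g (\<theta> + x) + g (\<theta> - x) - 2 *\<^sub>R g \<theta>)"
    unfolding k_def by (simp add: inner_add_right inner_diff_right)
  ultimately show ?thesis using mvt by (simp add: inner_diff_right)
qed

lemma gauss_sqrt_quadratic_form:
  assumes H: "psd_op d H" and L: "0 < L"
  defines "Q \<equiv> \<lambda>u. L * (norm (vec_of d u))\<^sup>2 + vec_of d u \<bullet> H (vec_of d u)"
  shows "integrable (gauss d) (\<lambda>u. sqrt (Q u))"
    and "(\<integral>u. sqrt (Q u) \<partial>gauss d) \<le> sqrt (L * real d + trace_op d H)"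
proof -
  note Hf = psd_opD[OF H]
  have Q_int: "integrable (gauss d) Q" unfolding Q_def
    by (intro Bochner_Integration.integrable_add Bochner_Integration.integrable_mult_right
        gauss_power2_norm gauss_quadratic_form Hf(1))
  have "(\<integral>u. Q u \<partial>gauss d) = L * real d + trace_op d H"
    unfolding Q_def using Hf(1)
    by (subst Bochner_Integration.integral_add)
       (auto intro!: Bochner_Integration.integrable_mult_right gauss_power2_norm gauss_quadratic_form
         simp: gauss_power2_norm(2) gauss_quadratic_form(2))
  moreover have Q_nonneg: "0 \<le> Q u" for u
    unfolding Q_def using Hf(4)[OF vec_of_in_Rd[of d u]] L by simp
  moreover have Q_measurable: "Q \<in> borel_measurable (gauss d)"
    unfolding Q_def quadratic_form_vec_of[OF Hf(1)]
    using borel_measurable_norm_vec_of by measurable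
  moreover have "integrable (gauss d) (\<lambda>u. sqrt (Q u))"
  proof (rule Bochner_Integration.integrable_bound[OF Bochner_Integration.integrable_add
        [OF integrable_const_gauss Q_int]])
    show "(\<lambda>u. sqrt (Q u)) \<in> borel_measurable (gauss d)" using Q_measurable by measurable
    have "sqrt q \<le> 1 + q" if "0 \<le> q" for q :: real
    proof (cases "q \<le> 1")
      case True
      then show ?thesis using that by (smt (verit) real_sqrt_le_1_iff)
    next
      case False
      then show ?thesis using real_sqrt_le_iff[of q "q * q"] by (simp add: real_sqrt_mult)
    qed
    then show "AE u in gauss d. norm (sqrt (Q u)) \<le> norm (1 + Q u)"
      using Q_nonneg by (intro AE_I2) simp
  qed
  ultimately show "integrable (gauss d) (\<lambda>u. sqrt (Q u))"
    and "(\<integral>u. sqrt (Q u) \<partial>gauss d) \<le> sqrt (L * real d + trace_op d H)"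
    using integral_sqrt_le_sqrt_integral[OF prob_space_gauss Q_int] by auto
qed

lemma borel_measurable_gradient_increment [measurable]:
  assumes "L-lipschitz_on (Rd d) g" "\<theta> \<in> Rd d"
  shows "(\<lambda>u. (g (\<theta> + \<mu> *\<^sub>R vec_of d u) - g \<theta>) \<bullet> e) \<in> borel_measurable (gauss d)"
  using assms
  by (intro borel_measurable_vec_of[of d "\<lambda>y. (g (\<theta> + \<mu> *\<^sub>R y) - g \<theta>) \<bullet> e"]
      continuous_on_inner continuous_on_diff continuous_on_const continuous_on_shift_Rd
      lipschitz_on_continuous_on)

lemma abs_gradient_increment_le:
  assumes lip: "L-lipschitz_on (Rd d) g" and "\<theta> \<in> Rd d" "y \<in> Rd d" "norm e = 1" "0 \<le> \<mu>"
  shows "\<bar>(g (\<theta> + \<mu> *\<^sub>R y) - g \<theta>) \<bullet> e\<bar> \<le> L * \<mu> * norm y"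
proof -
  have "\<bar>(g (\<theta> + \<mu> *\<^sub>R y) - g \<theta>) \<bullet> e\<bar> \<le> norm (g (\<theta> + \<mu> *\<^sub>R y) - g \<theta>) * norm e"
    by (rule Cauchy_Schwarz_ineq2)
  also have "\<dots> \<le> L * norm (\<mu> *\<^sub>R y)"
    using lipschitz_on_Rd_normD[OF lip, of "\<theta> + \<mu> *\<^sub>R y" \<theta>] assms by auto
  finally show ?thesis using assms(5) by (simp add: mult_ac)
qed

lemma smoothing_bias_bulk:
  fixes f :: "fvec \<Rightarrow> real" and g :: "fvec \<Rightarrow> fvec"
  assumes grad: "\<And>y. y \<in> Rd d \<Longrightarrow> has_grad d f (g y) y"
    and lip: "L-lipschitz_on (Rd d) g" and L: "0 < L"
    and H: "psd_op d H" and HL: "loewner_le d H (\<lambda>v. L *\<^sub>R v)"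
    and local: "\<And>p. p \<in> Rd d \<Longrightarrow> norm (p - \<theta>) \<le> R \<Longrightarrow>
        \<exists>D. (g has_derivative D) (at p within Rd d) \<and> loewner_le d D H"
    and \<theta>: "\<theta> \<in> Rd d" and \<mu>: "0 < \<mu>" and R: "2 * \<mu> * sqrt (real d) \<le> R"
    and e: "e \<in> Rd d" "norm e = 1"
  defines "P \<equiv> \<lambda>y. if norm y \<le> 2 * sqrt (real d) then (g (\<theta> + \<mu> *\<^sub>R y) - g \<theta>) \<bullet> e else 0"
  shows "integrable (gauss d) (\<lambda>u. P (vec_of d u))"
    and "(\<integral>u. P (vec_of d u) \<partial>gauss d) \<le> sqrt (2 * L) * \<mu> * sqrt (L * real d + trace_op d H) / 2"
proof -
  define Q where "Q = (\<lambda>y. L * (norm y)\<^sup>2 + y \<bullet> H y)"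
  note [measurable] = borel_measurable_gradient_increment[OF lip \<theta>] borel_measurable_norm_vec_of
  have P_measurable: "(\<lambda>u. P (vec_of d u)) \<in> borel_measurable (gauss d)"
    unfolding P_def by measurable
  show P_int: "integrable (gauss d) (\<lambda>u. P (vec_of d u))"
    using abs_gradient_increment_le[OF lip \<theta> _ e(2), of _ \<mu>] L \<mu>
    by (intro integrable_gauss_norm_bound[OF P_measurable, of 0 "L * \<mu>" 0]) (simp add: P_def)
  have "P y + P (- y) \<le> sqrt (2 * L) * \<mu> * sqrt (Q y)" if y: "y \<in> Rd d" for y
  proof (cases "norm y \<le> 2 * sqrt (real d)")
    case True
    have "norm (\<mu> *\<^sub>R y) = \<mu> * norm y" using \<mu> by simp
    also have "\<dots> \<le> \<mu> * (2 * sqrt (real d))" using True \<mu> by (intro mult_left_mono) auto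
    also have "\<dots> \<le> R" using R by (simp add: mult_ac)
    finally have x: "\<mu> *\<^sub>R y \<in> Rd d" "norm (\<mu> *\<^sub>R y) \<le> R" using y by auto
    have "P y + P (- y) = e \<bullet> (g (\<theta> + \<mu> *\<^sub>R y) + g (\<theta> - \<mu> *\<^sub>R y) - 2 *\<^sub>R g \<theta>)"
      using True unfolding P_def by (simp add: inner_commute inner_add_right inner_diff_right)
    also have "\<dots> \<le> sqrt (2 * L) * sqrt (Q (\<mu> *\<^sub>R y))"
      using gradient_second_difference_bound[OF grad lip L H HL local \<theta> e x] unfolding Q_def
      by simp
    also have "Q (\<mu> *\<^sub>R y) = \<mu>\<^sup>2 * Q y"
      unfolding Q_def using psd_opD(1)[OF H] by (simp add: linear_scale power2_eq_square algebra_simps)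
    finally show ?thesis using \<mu> by (simp add: real_sqrt_mult mult_ac)
  next
    case False
    then show ?thesis
      using L \<mu> psd_opD(4)[OF H y] unfolding P_def Q_def by simp
  qed
  then have "(\<integral>u. P (vec_of d u) \<partial>gauss d)
      \<le> (\<integral>u. sqrt (2 * L) * \<mu> * sqrt (Q (vec_of d u)) \<partial>gauss d) / 2"
    using gauss_sqrt_quadratic_form(1)[OF H L]
    by (intro integral_gauss_le_half_symmetric[OF P_measurable P_int]) (auto simp: Q_def)
  also have "\<dots> \<le> sqrt (2 * L) * \<mu> * sqrt (L * real d + trace_op d H) / 2"
    using gauss_sqrt_quadratic_form(2)[OF H L] L \<mu> by (simp add: Q_def mult_left_mono)
  finally show "(\<integral>u. P (vec_of d u) \<partial>gauss d)
      \<le> sqrt (2 * L) * \<mu> * sqrt (L * real d + trace_op d H) / 2" .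
qed

lemma smoothing_bias_tail:
  assumes lip: "L-lipschitz_on (Rd d) g" and \<theta>: "\<theta> \<in> Rd d" and \<mu>: "0 < \<mu>"
    and e: "norm e = 1" and d: "1 \<le> d"
  defines "T \<equiv> \<lambda>y. if norm y \<le> 2 * sqrt (real d) then 0 else (g (\<theta> + \<mu> *\<^sub>R y) - g \<theta>) \<bullet> e"
  shows "integrable (gauss d) (\<lambda>u. T (vec_of d u))"
    and "(\<integral>u. T (vec_of d u) \<partial>gauss d) \<le> L * \<mu> * (2 * sqrt (real d) * exp (- real d / 2))"
proof -
  define tail where "tail = (\<lambda>u. if 2 * sqrt (real d) < norm (vec_of d u) then norm (vec_of d u) else 0)"
  have L: "0 \<le> L" using lipschitz_on_nonneg[OF lip] .
  note increment_le = abs_gradient_increment_le[OF lip \<theta> vec_of_in_Rd e, of \<mu>]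
  note [measurable] = borel_measurable_gradient_increment[OF lip \<theta>] borel_measurable_norm_vec_of
  have "(\<lambda>u. T (vec_of d u)) \<in> borel_measurable (gauss d)" unfolding T_def by measurable
  then show T_int: "integrable (gauss d) (\<lambda>u. T (vec_of d u))"
    using increment_le L \<mu> by (intro integrable_gauss_norm_bound[of _ d 0 "L * \<mu>" 0]) (auto simp: T_def)
  have "T (vec_of d u) \<le> L * \<mu> * tail u" for u
    using increment_le[of u] L \<mu> unfolding T_def tail_def by auto
  then have "(\<integral>u. T (vec_of d u) \<partial>gauss d) \<le> L * \<mu> * (\<integral>u. tail u \<partial>gauss d)"
    using integral_mono[OF T_int Bochner_Integration.integrable_mult_right[OF gauss_norm_tail(1)[OF d]]]
    unfolding tail_def by simp
  also have "\<dots> \<le> L * \<mu> * (2 * sqrt (real d) * exp (- real d / 2))"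
    using L \<mu> gauss_norm_tail(2)[OF d] unfolding tail_def by (intro mult_left_mono) auto
  finally show "(\<integral>u. T (vec_of d u) \<partial>gauss d) \<le> L * \<mu> * (2 * sqrt (real d) * exp (- real d / 2))" .
qed

lemma smoothed_field_bias:
  fixes f :: "fvec \<Rightarrow> real" and g :: "fvec \<Rightarrow> fvec"
  assumes grad: "\<And>y. y \<in> Rd d \<Longrightarrow> has_grad d f (g y) y"
    and lip: "L-lipschitz_on (Rd d) g" and L: "0 < L"
    and H: "psd_op d H" and HL: "loewner_le d H (\<lambda>v. L *\<^sub>R v)"
    and local: "\<And>p. p \<in> Rd d \<Longrightarrow> norm (p - \<theta>) \<le> R \<Longrightarrow>
        \<exists>D. (g has_derivative D) (at p within Rd d) \<and> loewner_le d D H"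
    and \<theta>: "\<theta> \<in> Rd d" and \<mu>: "0 < \<mu>" and R: "2 * \<mu> * sqrt (real d) \<le> R" and d: "1 \<le> d"
  shows "norm (smoothed_field d \<mu> g \<theta> - g \<theta>)
    \<le> sqrt (2 * L) * \<mu> * sqrt (L * real d + trace_op d H) / 2
      + L * \<mu> * (2 * sqrt (real d) * exp (- real d / 2))"
proof -
  interpret prob_space "gauss d" by (rule prob_space_gauss)
  define err where "err = smoothed_field d \<mu> g \<theta> - g \<theta>"
  have "err \<in> Rd d"
    using grad[OF \<theta>] unfolding err_def by (auto simp: has_grad_def)
  show ?thesis
  proof (cases "err = 0")
    case True
    then show ?thesis using L \<mu> trace_op_nonneg[OF H] by (simp add: err_def)
  next
    case False
    define e where "e = err /\<^sub>R norm err"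
    have e: "e \<in> Rd d" "norm e = 1" unfolding e_def using \<open>err \<in> Rd d\<close> False by auto
    define W where "W = (\<lambda>y. (g (\<theta> + \<mu> *\<^sub>R y) - g \<theta>) \<bullet> e)"
    define P where "P = (\<lambda>y. if norm y \<le> 2 * sqrt (real d) then W y else 0)"
    define T where "T = (\<lambda>y. if norm y \<le> 2 * sqrt (real d) then 0 else W y)"
    have bulk: "integrable (gauss d) (\<lambda>u. P (vec_of d u))"
      "(\<integral>u. P (vec_of d u) \<partial>gauss d) \<le> sqrt (2 * L) * \<mu> * sqrt (L * real d + trace_op d H) / 2"
      using smoothing_bias_bulk[OF grad lip L H HL local \<theta> \<mu> R e] unfolding P_def W_def by auto
    have tail: "integrable (gauss d) (\<lambda>u. T (vec_of d u))"
      "(\<integral>u. T (vec_of d u) \<partial>gauss d) \<le> L * \<mu> * (2 * sqrt (real d) * exp (- real d / 2))"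
      using smoothing_bias_tail[OF lip \<theta> \<mu> e(2) d] unfolding T_def W_def by auto
    have "norm err = e \<bullet> err"
      unfolding e_def using False by (simp add: power2_norm_eq_inner[symmetric] power2_eq_square)
    also have "\<dots> = (\<integral>u. g (\<theta> + \<mu> *\<^sub>R vec_of d u) \<bullet> e \<partial>gauss d) - g \<theta> \<bullet> e"
      using inner_smoothed_field[OF lip \<theta> e(1)]
      by (simp add: err_def inner_commute inner_diff_right)
    also have "\<dots> = (\<integral>u. W (vec_of d u) \<partial>gauss d)"
      using integrable_smoothed_inner[OF lip \<theta>, of \<mu> e]
      unfolding W_def inner_diff_left by (simp add: prob_space)
    also have "\<dots> = (\<integral>u. P (vec_of d u) \<partial>gauss d) + (\<integral>u. T (vec_of d u) \<partial>gauss d)"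
      by (subst Bochner_Integration.integral_add[OF bulk(1) tail(1), symmetric])
         (auto simp: P_def T_def intro: Bochner_Integration.integral_cong)
    finally show ?thesis using bulk(2) tail(2) unfolding err_def by linarith
  qed
qed

section \<open>The bias in terms of the intrinsic dimension\<close>

text \<open>For d = 1 the bound is carried by the exponential term, since then
  exp (-1/2) is still at least 1/2.\<close>

lemma sqrt_dim_bound:
  fixes d :: nat
  assumes d: "1 \<le> d" and r: "1 \<le> r" "r \<le> real d"
  defines "E \<equiv> exp (- real d / 2)"
  shows "sqrt (2 * (real d + r)) / 2 + 2 * sqrt (real d) * E
    \<le> sqrt 3 * r * sqrt (real d) / 2 + (real d + 4) * sqrt (real d) / 2 * E"
proof (cases "d = 1")
  case True
  then have "r = 1" using r by simp
  have "exp (1/2::real) \<le> 2"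
  proof -
    have "(exp (1/2::real))\<^sup>2 = exp 1" by (simp add: power2_eq_square exp_add[symmetric])
    also have "\<dots> \<le> 2\<^sup>2" using exp_le by simp
    finally show ?thesis by (rule power2_le_imp_le) simp
  qed
  then have "1/2 \<le> E" unfolding E_def using True by (simp add: exp_minus field_simps)
  moreover have "3/2 \<le> sqrt (3::real)" by (rule real_le_rsqrt) (simp add: power2_eq_square)
  ultimately show ?thesis using True \<open>r = 1\<close> by simp
next
  case False
  then have d2: "2 \<le> real d" using d by simp
  have "2 * (real d + r) \<le> 3 * r\<^sup>2 * real d"
  proof -
    have "r \<le> r\<^sup>2" using mult_left_mono[of 1 r r] r by (simp add: power2_eq_square)
    moreover have "1 \<le> r\<^sup>2" using power_mono[of 1 r 2] r by simp
    moreover have "r\<^sup>2 * 2 \<le> r\<^sup>2 * real d" using d2 by (intro mult_left_mono) auto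
    moreover have "1 * real d \<le> r\<^sup>2 * real d" using \<open>1 \<le> r\<^sup>2\<close> by (intro mult_right_mono) auto
    ultimately show ?thesis by simp
  qed
  then have "sqrt (2 * (real d + r)) \<le> sqrt 3 * r * sqrt (real d)"
    using real_sqrt_le_mono r by (fastforce simp: real_sqrt_mult)
  moreover have "2 * sqrt (real d) * E \<le> (real d + 4) * sqrt (real d) / 2 * E"
    unfolding E_def by (intro mult_right_mono) (auto simp: field_simps)
  ultimately show ?thesis by simp
qed

lemma smoothing_bias_le_intdim_bound:
  fixes d :: nat
  assumes L: "0 < L" and \<mu>: "0 < \<mu>" and d: "1 \<le> d" and r: "1 \<le> r" "r \<le> real d"
    and T: "T \<le> r * L"
  shows "sqrt (2 * L) * \<mu> * sqrt (L * real d + T) / 2 + L * \<mu> * (2 * sqrt (real d) * exp (- real d / 2))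
    \<le> sqrt 3 * \<mu> * L * r * sqrt (real d) / 2 + \<mu> * L * (real d + 4) * sqrt (real d) / 2 * exp (- real d / 2)"
proof -
  have "sqrt (2 * L) * sqrt (L * real d + T) \<le> sqrt (L\<^sup>2 * (2 * (real d + r)))"
    unfolding real_sqrt_mult[symmetric] using T L
    by (intro real_sqrt_le_mono) (auto simp: power2_eq_square algebra_simps intro: mult_left_mono)
  also have "\<dots> = L * sqrt (2 * (real d + r))" using L by (simp add: real_sqrt_mult)
  finally have "sqrt (2 * L) * \<mu> * sqrt (L * real d + T) / 2 + L * \<mu> * (2 * sqrt (real d) * exp (- real d / 2))
      \<le> (L * \<mu>) * (sqrt (2 * (real d + r)) / 2 + 2 * sqrt (real d) * exp (- real d / 2))"
    using \<mu> by (simp add: algebra_simps mult_left_mono)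
  also have "\<dots> \<le> (L * \<mu>) * (sqrt 3 * r * sqrt (real d) / 2
      + (real d + 4) * sqrt (real d) / 2 * exp (- real d / 2))"
    using sqrt_dim_bound[OF d r] L \<mu> by (intro mult_left_mono) auto
  finally show ?thesis by (simp add: algebra_simps)
qed

lemma power2_norm_le_of_norm_diff_le:
  fixes a b :: "'a::real_normed_vector"
  assumes "norm (a - b) \<le> B1 + B2"
  shows "(norm b)\<^sup>2 \<le> 4 * B1\<^sup>2 + 4 * B2\<^sup>2 + 2 * (norm a)\<^sup>2"
proof -
  have "norm b \<le> norm a + (B1 + B2)" using assms norm_triangle_ineq3[of a b] by linarith
  then have "(norm b)\<^sup>2 \<le> (norm a + (B1 + B2))\<^sup>2" by (intro power_mono) auto
  also have "\<dots> = 4 * B1\<^sup>2 + 4 * B2\<^sup>2 + 2 * (norm a)\<^sup>2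
      - ((norm a - (B1 + B2))\<^sup>2 + 2 * (B1 - B2)\<^sup>2)"
    by (simp add: power2_eq_square algebra_simps)
  finally show ?thesis
    using zero_le_power2[of "norm a - (B1 + B2)"] zero_le_power2[of "B1 - B2"] by linarith
qed

lemma Rd_0: "Rd 0 = {0}"
  by (auto simp: Rd_def intro: fvec_eqI)

lemma smoothed_average_loss_bounds:
  fixes f :: "nat \<Rightarrow> fvec \<Rightarrow> real" and g :: "nat \<Rightarrow> fvec \<Rightarrow> fvec" and G :: "fvec \<Rightarrow> fvec"
    and N d :: nat and L \<mu> r :: real
  defines "F \<equiv> \<lambda>\<theta>. (\<Sum>i<N. f i \<theta>) / real N"
  defines "B1 \<equiv> sqrt 3 * \<mu> * L * r * sqrt (real d) / 2"
    and "B2 \<equiv> \<mu> * L * (real d + 4) * sqrt (real d) / 2 * exp (- real d / 2)"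
  assumes N: "0 < N" and L: "0 < L" and \<mu>: "0 < \<mu>" and r: "r \<le> real d" and \<theta>: "\<theta> \<in> Rd d"
    and smooth: "\<forall>i<N. smooth_with d L (f i) (g i)"
    and grad: "\<forall>\<theta>\<in>Rd d. has_grad d F (G \<theta>) \<theta>"
    and H: "psd_op d H" "loewner_le d H (\<lambda>v. L *\<^sub>R v)" "0 < opnorm d H" "intdim d H \<le> r"
    and local: "\<forall>p\<in>Rd d. norm (p - \<theta>) \<le> R \<longrightarrow>
      (\<exists>D. (G has_derivative D) (at p within Rd d) \<and> loewner_le d D H)"
    and R: "2 * \<mu> * sqrt (real d) \<le> R"
  shows "has_grad d (smoothed d \<mu> F) (smoothed_field d \<mu> G \<theta>) \<theta>"
    and "norm (smoothed_field d \<mu> G \<theta> - G \<theta>) \<le> B1 + B2"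
    and "(norm (G \<theta>))\<^sup>2 \<le> 3 * \<mu>\<^sup>2 * L\<^sup>2 * r\<^sup>2 * real d
      + \<mu>\<^sup>2 * L\<^sup>2 * real d * (real d + 4)\<^sup>2 * exp (- real d) + 2 * (norm (smoothed_field d \<mu> G \<theta>))\<^sup>2"
proof -
  have lip: "L-lipschitz_on (Rd d) G"
    using lipschitz_on_average_gradient[OF N _ smooth] grad L unfolding F_def by simp
  show "has_grad d (smoothed d \<mu> F) (smoothed_field d \<mu> G \<theta>) \<theta>"
    using grad by (intro has_grad_smoothed[OF _ lip L \<theta>]) auto
  show bias: "norm (smoothed_field d \<mu> G \<theta> - G \<theta>) \<le> B1 + B2"
  proof (cases "d = 0")
    case True
    then show ?thesis
      using grad \<theta> smoothed_field_in_Rd[of d \<mu> G \<theta>] by (simp add: B1_def B2_def has_grad_def Rd_0)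
  next
    case False
    then have d: "1 \<le> d" by simp
    note intdim = psd_op_intdim_bounds[OF H d L]
    have "norm (smoothed_field d \<mu> G \<theta> - G \<theta>)
        \<le> sqrt (2 * L) * \<mu> * sqrt (L * real d + trace_op d H) / 2
          + L * \<mu> * (2 * sqrt (real d) * exp (- real d / 2))"
      using grad local by (intro smoothed_field_bias[OF _ lip L H(1,2) _ \<theta> \<mu> R d]) auto
    also have "\<dots> \<le> B1 + B2"
      unfolding B1_def B2_def by (rule smoothing_bias_le_intdim_bound[OF L \<mu> d intdim(2) r intdim(1)])
    finally show ?thesis .
  qed
  have "4 * B1\<^sup>2 = 3 * \<mu>\<^sup>2 * L\<^sup>2 * r\<^sup>2 * real d"
    unfolding B1_def by (simp add: power_mult_distrib power_divide)
  moreover have "4 * B2\<^sup>2 = \<mu>\<^sup>2 * L\<^sup>2 * real d * (real d + 4)\<^sup>2 * exp (- real d)"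
    unfolding B2_def by (simp add: power_mult_distrib power_divide exp_of_nat_mult[symmetric]
        power2_eq_square exp_add[symmetric] mult_ac)
  ultimately show "(norm (G \<theta>))\<^sup>2 \<le> 3 * \<mu>\<^sup>2 * L\<^sup>2 * r\<^sup>2 * real d
      + \<mu>\<^sup>2 * L\<^sup>2 * real d * (real d + 4)\<^sup>2 * exp (- real d) + 2 * (norm (smoothed_field d \<mu> G \<theta>))\<^sup>2"
    using power2_norm_le_of_norm_diff_le[OF bias] by simp
qed

theorem mainTheorem10:
  shows "\<exists>c1>0. \<forall>(d::nat) (N::nat) (Li :: nat \<Rightarrow> fvec \<Rightarrow> real) (gi :: nat \<Rightarrow> fvec \<Rightarrow> fvec)
      (gL :: fvec \<Rightarrow> fvec) (L::real) (\<sigma>::real) (G::real) (\<mu>::real) (\<alpha>::real) (s::real)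
      (r::real) (\<theta>t::fvec).
    let Loss = (\<lambda>\<theta>. (\<Sum>i<N. Li i \<theta>) / real N) in
    ( N > 0 \<and> L > 0 \<and> \<mu> > 0 \<and> \<alpha> > 0 \<and> s > 0 \<and> r \<le> real d \<and> \<theta>t \<in> Rd d
    \<comment> \<open>(C-1): every per-sample loss is L-smooth\<close>
    \<and> (\<forall>i<N. smooth_with d L (Li i) (gi i))
    \<comment> \<open>gL is the gradient of the overall loss\<close>
    \<and> (\<forall>\<theta>\<in>Rd d. has_grad d Loss (gL \<theta>) \<theta>)
    \<comment> \<open>(C-2): stochastic gradients (uniformly sampled) have variance at most sigma^2,
        and the gradient is bounded by G\<close>
    \<and> (\<forall>\<theta>\<in>Rd d. (\<Sum>i<N. (norm (gi i \<theta> - gL \<theta>))\<^sup>2) / real N \<le> \<sigma>\<^sup>2)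
    \<and> (\<forall>\<theta>\<in>Rd d. norm (gL \<theta>) \<le> G)
    \<comment> \<open>Local Intrinsic Dimension assumption at theta_t\<close>
    \<and> (\<exists>H. psd_op d H \<and> loewner_le d H (\<lambda>v. L *\<^sub>R v) \<and> opnorm d H > 0 \<and> intdim d H \<le> r
         \<and> (\<forall>\<theta>\<in>Rd d. norm (\<theta> - \<theta>t) \<le> 2 * \<alpha> * s * G + 2 * \<mu> * sqrt (real d) \<longrightarrow>
              (\<exists>D. (gL has_derivative D) (at \<theta> within Rd d) \<and> loewner_le d D H))) )
    \<longrightarrow>
    (\<exists>g\<mu>. has_grad d (smoothed d \<mu> Loss) g\<mu> \<theta>t
      \<and> norm (g\<mu> - gL \<theta>t) \<le> sqrt 3 * \<mu> * L * r * sqrt (real d) / 2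
           + \<mu> * L * (real d + 4) * sqrt (real d) / 2 * exp (- c1 / 2 * real d)
      \<and> (norm (gL \<theta>t))\<^sup>2 \<le> 3 * \<mu>\<^sup>2 * L\<^sup>2 * r\<^sup>2 * real d
           + \<mu>\<^sup>2 * L\<^sup>2 * real d * (real d + 4)\<^sup>2 * exp (- c1 * real d) + 2 * (norm g\<mu>)\<^sup>2)"
  unfolding Let_def
  apply (intro exI[of _ "1::real"] conjI allI impI)
   apply simp
  apply (elim conjE exE)
  subgoal premises hyps for d N Li gi gL L \<sigma> G \<mu> \<alpha> s r \<theta>t H
  proof -
    have "0 \<le> G" using hyps(7,11) norm_ge_zero order_trans by blast
    then have "2 * \<mu> * sqrt (real d) \<le> 2 * \<alpha> * s * G + 2 * \<mu> * sqrt (real d)"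
      using hyps(4,5) by simp
    note bounds = smoothed_average_loss_bounds[OF hyps(1,2,3,6,7,8,9,12-16) this]
    show ?thesis
      using bounds by (intro exI[of _ "smoothed_field d \<mu> gL \<theta>t"]) (simp add: mult.commute)
  qed
  done

end
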